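(* Let $d,m$ be positive integers and let $X=\{X_k:k\in\mathbb{Z}^d\}$ be a centered, complex-valued, strictly stationary random field with $E|X_0|^2=\sigma^2<\infty$ and $\varrho'(X,n)\to0$ as $n\to\infty$; let $f$ be its (continuous) spectral density, $f(\lambda):=f(e^{i\lambda})$. Let $\lambda\in\mathfrak P:=(-\pi,\pi]^d\setminus\{-\pi,0,\pi\}^d$. Let $\{v^{(n)}\}$ be a sequence in $\mathbb{N}^d$ with $\lim_n\min\{v^{(n)}_1,\dots,v^{(n)}_d\}=\infty$. Let $\{\lambda^{(j,n)}\}_{n=1}^\infty$, $j=1,\dots,m$, be sequences in $(-\pi,\pi]^d$ converging to $\lambda$ such that for every pair $j\ne k$ there are $\delta(j,k)\in(0,1/2)$ and $N(j,k)\in\mathbb{N}$ such that for every $n\ge N(j,k)$ some index $s$ satisfies $|\lambda^{(j,n)}_s-\lambda^{(k,n)}_s|>(v^{(n)}_s)^{-(1/2-\delta(j,k))}$. Let $\mathbf v=(a_1,b_1,\dots,a_m,b_m)\in\mathbb{R}^{2m}$ be fixed. Then \[\lim_{n\to\infty}\sup_{w\in\mathbb{Z}^d}\left|\tfrac12 f(\lambda)\|\mathbf v\|^2-\frac{1}{V^{(n)}}E\big[G(\mathbf v,\mathbf S_n^w)\big]^2\right|=0.\]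
   Context: Strictly stationary: all finite-dimensional joint distributions are invariant under translation of indices. $\varrho(\mathcal A,\mathcal B)=\sup\mathrm{Corr}(f,g)$ over real $f\in L^2(\mathcal A),g\in L^2(\mathcal B)$; $\varrho'(X,n)=\sup_{S,T}\varrho(\sigma(X_k:k\in S),\sigma(X_k:k\in T))$ over finite nonempty $S,T\subset\mathbb{Z}^d$ with $|k_u-l_u|\ge n$ for all $k\in S,l\in T$ for some coordinate $u$. The spectral density is the nonnegative function $f$ on $\mathbb{T}^d$ with $EX_k\overline{X_j}=\int_{\mathbb{T}^d}e^{i(k-j)\cdot\theta}f(e^{i\theta})\,dm^d$ ($m^d$ normalized Haar measure); it exists and is continuous under these hypotheses. $X_k^{(\mu)}:=e^{-ik\cdot\mu}X_k$; $\mathfrak B_n:=\{w\in\mathbb{N}^d:1\le w_j\le v^{(n)}_j\}$; $V^{(n)}:=\prod_jv^{(n)}_j$; $\mathfrak B_{w,n}:=\{k+w:k\in\mathfrak B_n\}$; $S^{(\mu)}_{\mathcal S}:=\sum_{k\in\mathcal S}X_k^{(\mu)}$. $\mathbf S_n^w:=\big(S^{(\lambda^{(1,n)})}_{\mathfrak B_{w,n}},\dots,S^{(\lambda^{(m,n)})}_{\mathfrak B_{w,n}}\big)\in\mathbb{C}^m$. For $\mathbf z\in\mathbb{C}^m$, $G(\mathbf v,\mathbf z):=\sum_{j=1}^m(a_j\,\mathrm{Re}\,z_j+b_j\,\mathrm{Im}\,z_j)$, and $\|\mathbf v\|^2=\sum_j(a_j^2+b_j^2)$. *)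

theory Defs
  imports "HOL-Probability.Probability"
begin

text \<open>Random field indexed by int^'d (the dimension d is CARD('d)).\<close>

definition strictly_stationary ::
  "'a measure \<Rightarrow> (int^'d \<Rightarrow> 'a \<Rightarrow> complex) \<Rightarrow> bool" where
  "strictly_stationary M X \<longleftrightarrow>
     (\<forall>S h. finite S \<longrightarrow>
        distr M (Pi\<^sub>M S (\<lambda>_. (borel :: complex measure))) (\<lambda>\<omega>. \<lambda>k\<in>S. X (k + h) \<omega>)
      = distr M (Pi\<^sub>M S (\<lambda>_. (borel :: complex measure))) (\<lambda>\<omega>. \<lambda>k\<in>S. X k \<omega>))"

definition sigma_field_gen ::
  "'a measure \<Rightarrow> (int^'d \<Rightarrow> 'a \<Rightarrow> complex) \<Rightarrow> (int^'d) set \<Rightarrow> 'a measure" where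
  "sigma_field_gen M X S =
     vimage_algebra (space M) (\<lambda>\<omega>. \<lambda>k\<in>S. X k \<omega>) (Pi\<^sub>M S (\<lambda>_. (borel :: complex measure)))"

definition covar :: "'a measure \<Rightarrow> ('a \<Rightarrow> real) \<Rightarrow> ('a \<Rightarrow> real) \<Rightarrow> real" where
  "covar M f g = (\<integral>x. f x * g x \<partial>M) - (\<integral>x. f x \<partial>M) * (\<integral>x. g x \<partial>M)"

definition corr :: "'a measure \<Rightarrow> ('a \<Rightarrow> real) \<Rightarrow> ('a \<Rightarrow> real) \<Rightarrow> real" where
  "corr M f g = covar M f g / sqrt (covar M f f * covar M g g)"

text \<open>Maximal correlation rho(A,B): sup of Corr(f,g) over real f in L2(A), g in L2(B)
  (with nonzero variances, so that Corr is defined); convention 0 if there are none.\<close>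
definition max_corr :: "'a measure \<Rightarrow> 'a measure \<Rightarrow> 'a measure \<Rightarrow> real" where
  "max_corr M A B =
    (let C = {corr M f g | f g.
                f \<in> borel_measurable A \<and> g \<in> borel_measurable B \<and>
                integrable M (\<lambda>x. (f x)\<^sup>2) \<and> integrable M (\<lambda>x. (g x)\<^sup>2) \<and>
                covar M f f > 0 \<and> covar M g g > 0}
     in if C = {} then 0 else Sup C)"

definition rho' :: "'a measure \<Rightarrow> (int^'d \<Rightarrow> 'a \<Rightarrow> complex) \<Rightarrow> nat \<Rightarrow> real" where
  "rho' M X n = Sup {max_corr M (sigma_field_gen M X S) (sigma_field_gen M X T) | S T.
       finite S \<and> S \<noteq> {} \<and> finite T \<and> T \<noteq> {} \<and>
       (\<exists>u. \<forall>k\<in>S. \<forall>l\<in>T. \<bar>k$u - l$u\<bar> \<ge> int n)}"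

definition torus :: "(complex^'d) set" where
  "torus = {z. \<forall>u. norm (z$u) = 1}"

text \<open>f is a spectral density of X: nonnegative function on T^d with
  E X_k conj(X_j) = int_{T^d} e^{i(k-j).theta} f(e^{i theta}) dm^d (normalized Haar measure).\<close>
definition is_spectral_density ::
  "'a measure \<Rightarrow> (int^'d \<Rightarrow> 'a \<Rightarrow> complex) \<Rightarrow> (complex^'d \<Rightarrow> real) \<Rightarrow> bool" where
  "is_spectral_density M X f \<longleftrightarrow>
     (\<forall>z\<in>torus. f z \<ge> 0) \<and>
     (\<forall>k j. (\<integral>\<omega>. X k \<omega> * cnj (X j \<omega>) \<partial>M) =
        integral (cbox (\<chi> _. -pi) (\<chi> _. pi))
          (\<lambda>\<theta>::real^'d. exp (\<i> * complex_of_real (\<Sum>u\<in>UNIV. real_of_int (k$u - j$u) * \<theta>$u))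
                         * complex_of_real (f (\<chi> u. cis (\<theta>$u))))
        / (2 * pi) ^ CARD('d))"

definition block :: "nat^'d \<Rightarrow> int^'d \<Rightarrow> (int^'d) set" where
  "block v w = {k + w | k. \<forall>u. 1 \<le> k$u \<and> k$u \<le> int (v$u)}"

definition twisted_sum ::
  "(int^'d \<Rightarrow> 'a \<Rightarrow> complex) \<Rightarrow> real^'d \<Rightarrow> (int^'d) set \<Rightarrow> 'a \<Rightarrow> complex" where
  "twisted_sum X \<mu> S \<omega> =
     (\<Sum>k\<in>S. exp (- \<i> * complex_of_real (\<Sum>u\<in>UNIV. real_of_int (k$u) * \<mu>$u)) * X k \<omega>)"

definition Gfun :: "nat \<Rightarrow> (nat \<Rightarrow> real) \<Rightarrow> (nat \<Rightarrow> real) \<Rightarrow> (nat \<Rightarrow> complex) \<Rightarrow> real" where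
  "Gfun m a b z = (\<Sum>j=1..m. a j * Re (z j) + b j * Im (z j))"

end

theory Submission
  imports Defs
begin

text \<open>
  For a block B of V indices, E|S_mu|^2 is the integral of the spectral density against V times
  the Fejer kernel of B centred at mu. Approximating f uniformly by trigonometric polynomials
  (Stone-Weierstrass) yields E|S_mu|^2 / V --> f(lambda) as mu --> lambda, uniformly in the
  position of the block.
  Cross moments vanish by a shift argument. Translating the block by one unit in direction s
  multiplies E[S_mu conj(S_mu')] by exp(i(mu'_s - mu_s)) and, by strict stationarity,
  E[S_mu S_mu'] by exp(-i(mu_s + mu'_s)); but the sums only change on two slabs of V / v_s
  points, so (factor - 1) * moment = O(V / sqrt v_s). The factor stays away from 1 by the
  separation of the frequencies, resp. because lambda_s is not in {-pi, 0, pi}.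
  Finally E G^2 = Re(E|Z|^2 + E Z^2) / 2 for Z = sum_j (a_j - i b_j) S_j. Only second moments
  enter.
\<close>

section \<open>Integration over the cube of angles\<close>

abbreviation cube :: "(real^'d::finite) set" where
  "cube \<equiv> cbox (\<chi> _. -pi) (\<chi> _. pi)"

lemma vec_sum_basis_nth:
  fixes f :: "real^'d::finite \<Rightarrow> real"
  shows "(\<Sum>b\<in>Basis. f b *\<^sub>R b) $ u = f (axis u 1)"
proof -
  have "(\<Sum>b\<in>Basis. f b *\<^sub>R b) $ u = (\<Sum>b\<in>Basis. f b * (b \<bullet> axis u 1))"
    by (simp add: cart_eq_inner_axis inner_sum_left)
  also have "\<dots> = f (axis u 1)"
    by (subst sum.remove[of _ "axis u 1"]) (auto simp: inner_Basis intro!: sum.neutral)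
  finally show ?thesis .
qed

lemma integral_lborel_prod_coordinates:
  fixes g :: "'d::finite \<Rightarrow> real \<Rightarrow> complex"
  assumes int: "\<And>u. integrable lborel (g u)"
  shows "(\<integral>\<theta>. (\<Prod>u\<in>UNIV. g u (\<theta>$u)) \<partial>(lborel :: (real^'d) measure)) = (\<Prod>u\<in>UNIV. integral\<^sup>L lborel (g u))"
proof -
  define H where "H b = g (SOME u. b = axis u 1)" for b :: "real^'d"
  have H_axis: "H (axis u 1) = g u" for u
  proof -
    have "(SOME u'. axis u 1 = axis u' (1::real)) = u"
      by (rule some_equality) (auto simp: axis_eq_axis)
    then show ?thesis by (simp add: H_def)
  qed
  have Basis_axis: "(Basis :: (real^'d) set) = (\<lambda>u. axis u 1) ` UNIV"
    by (auto simp: Basis_vec_def)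
  have prod_Basis: "(\<Prod>b\<in>Basis. P b) = (\<Prod>u\<in>UNIV. P (axis u 1))" for P :: "real^'d \<Rightarrow> complex"
    unfolding Basis_axis by (subst prod.reindex) (auto simp: inj_def axis_eq_axis)
  have meas: "(\<lambda>\<theta>::real^'d. \<Prod>u\<in>UNIV. g u (\<theta>$u)) \<in> borel_measurable borel"
    using borel_measurable_integrable[OF int] by measurable
  interpret product_sigma_finite "\<lambda>b::real^'d. lborel :: real measure"
    by standard
  have "(\<integral>\<theta>. (\<Prod>u\<in>UNIV. g u (\<theta>$u)) \<partial>(lborel :: (real^'d) measure))
      = (\<integral>\<theta>. (\<Prod>u\<in>UNIV. g u (\<theta>$u)) \<partial>distr (\<Pi>\<^sub>M b\<in>Basis. lborel) borel (\<lambda>x. \<Sum>b\<in>Basis. x b *\<^sub>R b))"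
    by (simp flip: lborel_eq)
  also have "\<dots> = (\<integral>x. (\<Prod>u\<in>UNIV. g u ((\<Sum>b\<in>Basis. x b *\<^sub>R b) $ u)) \<partial>(\<Pi>\<^sub>M b\<in>Basis. lborel))"
    by (rule integral_distr[OF _ meas]) measurable
  also have "\<dots> = (\<integral>x. (\<Prod>b\<in>Basis. H b (x b)) \<partial>(\<Pi>\<^sub>M b\<in>Basis. lborel))"
    unfolding vec_sum_basis_nth prod_Basis H_axis ..
  also have "\<dots> = (\<Prod>b\<in>Basis. integral\<^sup>L lborel (H b))"
    by (rule product_integral_prod) (auto simp: Basis_axis H_axis int)
  finally show ?thesis by (simp add: prod_Basis H_axis)
qed

lemma integral_cube_prod:
  fixes g :: "'d::finite \<Rightarrow> real \<Rightarrow> complex"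
  assumes cont: "\<And>u. continuous_on {-pi..pi} (g u)"
  shows "integral cube (\<lambda>\<theta>::real^'d. \<Prod>u\<in>UNIV. g u (\<theta>$u))
       = (\<Prod>u\<in>UNIV. integral {-pi..pi} (g u))"
proof -
  define g' where "g' u t = indicator {-pi..pi} t *\<^sub>R g u t" for u t
  have int_g': "integrable lborel (g' u)" for u
    unfolding g'_def by (rule borel_integrable_compact[OF compact_Icc cont])
  have indicator_cube: "indicator cube \<theta> = (\<Prod>u\<in>UNIV. indicator {-pi..pi} (\<theta>$u) :: real)" for \<theta> :: "real^'d"
    by (auto simp: indicator_def mem_box_cart)
  have "integral cube (\<lambda>\<theta>::real^'d. \<Prod>u\<in>UNIV. g u (\<theta>$u)) = (\<integral>\<theta>. indicator cube \<theta> *\<^sub>R (\<Prod>u\<in>UNIV. g u (\<theta>$u)) \<partial>lborel)"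
  proof -
    have "set_integrable lborel cube (\<lambda>\<theta>::real^'d. \<Prod>u\<in>UNIV. g u (\<theta>$u))"
      unfolding set_integrable_def
      by (intro borel_integrable_compact compact_cbox continuous_on_prod
            continuous_on_compose2[OF cont]) (auto simp: mem_box_cart intro!: continuous_intros)
    from set_borel_integral_eq_integral(2)[OF this] show ?thesis
      by (simp add: set_lebesgue_integral_def)
  qed
  also have "\<dots> = (\<integral>\<theta>. (\<Prod>u\<in>UNIV. g' u (\<theta>$u)) \<partial>lborel)"
    by (simp add: indicator_cube g'_def prod.distrib scaleR_conv_of_real of_real_prod)
  also have "\<dots> = (\<Prod>u\<in>UNIV. integral\<^sup>L lborel (g' u))"
    by (rule integral_lborel_prod_coordinates[OF int_g'])
  also have "\<dots> = (\<Prod>u\<in>UNIV. integral {-pi..pi} (g u))"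
  proof (intro prod.cong refl)
    fix u
    have "set_integrable lborel {-pi..pi} (g u)"
      unfolding set_integrable_def by (rule borel_integrable_compact[OF compact_Icc cont])
    from set_borel_integral_eq_integral(2)[OF this] show "integral\<^sup>L lborel (g' u) = integral {-pi..pi} (g u)"
      by (simp add: g'_def[abs_def] set_lebesgue_integral_def)
  qed
  finally show ?thesis .
qed

definition fourier_mode :: "int^'d::finite \<Rightarrow> real^'d \<Rightarrow> complex" where
  "fourier_mode h \<theta> = exp (\<i> * complex_of_real (\<Sum>u\<in>UNIV. real_of_int (h$u) * \<theta>$u))"

lemma fourier_mode_prod: "fourier_mode h \<theta> = (\<Prod>u\<in>UNIV. exp (\<i> * complex_of_real (real_of_int (h$u) * \<theta>$u)))"
  unfolding fourier_mode_def of_real_sum sum_distrib_left by (rule exp_sum) simp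

lemma integral_exp_i_int_mult:
  fixes n :: int
  shows "integral {-pi..pi} (\<lambda>t. exp (\<i> * complex_of_real (real_of_int n * t))) = (if n = 0 then complex_of_real (2 * pi) else 0)"
proof (cases "n = 0")
  case True
  then show ?thesis by (simp add: scaleR_conv_of_real)
next
  case False
  define a where "a = \<i> * complex_of_int n"
  have a0: "a \<noteq> 0" using False by (simp add: a_def)
  have eqf: "(\<lambda>t. exp (\<i> * complex_of_real (real_of_int n * t))) = (\<lambda>t. exp (a * complex_of_real t))"
    by (simp add: a_def mult.assoc)
  define F where "F t = exp (a * of_real t) / a" for t
  have d: "(F has_vector_derivative exp (a * complex_of_real t)) (at t within {-pi..pi})" for t
    unfolding F_def using a0
    by (intro derivative_eq_intros has_complex_derivative_imp_has_vector_derivative [unfolded o_def] | simp)+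
  have "((\<lambda>t. exp (a * complex_of_real t)) has_integral F pi - F (-pi)) {-pi..pi}"
    by (rule fundamental_theorem_of_calculus) (auto intro: d)
  moreover have "F pi = F (-pi)"
  proof -
    have "exp (a * complex_of_real pi) = cis (real_of_int n * pi)"
      by (simp add: cis_conv_exp a_def mult_ac)
    moreover have "exp (a * complex_of_real (-pi)) = cis (- (real_of_int n * pi))"
      by (simp add: cis_conv_exp a_def mult_ac)
    moreover have "cis (real_of_int n * pi) = cis (- (real_of_int n * pi))"
      by (simp add: cis.ctr sin_zero_iff_int2)
    ultimately show ?thesis by (simp add: F_def)
  qed
  ultimately have "integral {-pi..pi} (\<lambda>t. exp (a * complex_of_real t)) = 0" by (simp add: integral_unique)
  then show ?thesis using False eqf by simp
qed

lemma integral_fourier_mode: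
  fixes h :: "int^'d::finite"
  shows "integral cube (fourier_mode h) = (if h = 0 then (2 * pi) ^ CARD('d) else 0)"
proof -
  have "integral cube (fourier_mode h)
     = (\<Prod>u\<in>UNIV. integral {-pi..pi} (\<lambda>t. exp (\<i> * complex_of_real (real_of_int (h$u) * t))))"
    unfolding fourier_mode_prod
    by (rule integral_cube_prod) (auto intro!: continuous_intros)
  also have "\<dots> = (\<Prod>u\<in>UNIV. if h$u = 0 then complex_of_real (2 * pi) else 0)"
    by (intro prod.cong refl integral_exp_i_int_mult)
  also have "\<dots> = (if h = 0 then (2 * pi) ^ CARD('d) else 0)"
  proof (cases "h = 0")
    case True then show ?thesis by simp
  next
    case False
    then obtain u where "h$u \<noteq> 0" by (auto simp: vec_eq_iff)
    then have "(\<Prod>u\<in>UNIV. if h$u = 0 then complex_of_real (2 * pi) else 0) = 0"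
      by (intro prod_zero) auto
    then show ?thesis using False by simp
  qed
  finally show ?thesis .
qed

lemma fourier_mode_mult: "fourier_mode k \<theta> * fourier_mode j \<theta> = fourier_mode (k + j) \<theta>"
  by (simp add: fourier_mode_def sum.distrib distrib_right algebra_simps flip: exp_add)

lemma fourier_mode_cnj: "cnj (fourier_mode k \<theta>) = fourier_mode (- k) \<theta>"
  by (simp add: fourier_mode_def exp_cnj sum_negf)

lemma fourier_mode_mult_cnj: "fourier_mode k \<theta> * cnj (fourier_mode j \<theta>) = fourier_mode (k - j) \<theta>"
  by (simp add: fourier_mode_cnj fourier_mode_mult)

lemma norm_fourier_mode [simp]: "cmod (fourier_mode k \<theta>) = 1"
  by (simp add: fourier_mode_def norm_exp_i_times)

lemma continuous_on_fourier_mode [continuous_intros]: "continuous_on S (fourier_mode k)"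
  unfolding fourier_mode_def by (intro continuous_intros)

lemma integral_of_real_on:
  fixes g :: "'n::euclidean_space \<Rightarrow> real"
  assumes "g integrable_on S"
  shows "integral S (\<lambda>x. complex_of_real (g x)) = of_real (integral S g)"
  using has_integral_of_real[OF integrable_integral[OF assms]] by (rule integral_unique)

lemma integral_Re_on:
  fixes F :: "'n::euclidean_space \<Rightarrow> complex"
  assumes "F integrable_on S"
  shows "integral S (\<lambda>x. Re (F x)) = Re (integral S F)"
  using has_integral_Re[OF integrable_integral[OF assms]] by (rule integral_unique)

lemma integral_cube_norm_trig_sum:
  fixes c :: "int^'d::finite \<Rightarrow> complex"
  assumes A: "finite A"
  shows "integral cube (\<lambda>\<theta>::real^'d. (cmod (\<Sum>k\<in>A. c k * fourier_mode k \<theta>))\<^sup>2) = (2 * pi) ^ CARD('d) * (\<Sum>k\<in>A. (cmod (c k))\<^sup>2)"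
proof -
  have int: "(\<lambda>\<theta>::real^'d. c k * cnj (c j) * fourier_mode (k - j) \<theta>) integrable_on cube" for k j
    by (intro integrable_continuous continuous_intros)
  have "complex_of_real (integral cube (\<lambda>\<theta>::real^'d. (cmod (\<Sum>k\<in>A. c k * fourier_mode k \<theta>))\<^sup>2))
      = integral cube (\<lambda>\<theta>::real^'d. complex_of_real ((cmod (\<Sum>k\<in>A. c k * fourier_mode k \<theta>))\<^sup>2))"
    by (rule integral_of_real_on[symmetric]) (intro integrable_continuous continuous_intros)
  also have "\<dots> = integral cube (\<lambda>\<theta>::real^'d. \<Sum>k\<in>A. \<Sum>j\<in>A. c k * cnj (c j) * fourier_mode (k - j) \<theta>)"
  proof (rule arg_cong[where f="integral cube"], rule ext)
    fix \<theta> :: "real^'d"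
    have "complex_of_real ((cmod (\<Sum>k\<in>A. c k * fourier_mode k \<theta>))\<^sup>2) = (\<Sum>k\<in>A. c k * fourier_mode k \<theta>) * cnj (\<Sum>k\<in>A. c k * fourier_mode k \<theta>)"
      by (simp only: complex_norm_square)
    also have "\<dots> = (\<Sum>k\<in>A. \<Sum>j\<in>A. (c k * fourier_mode k \<theta>) * (cnj (c j) * cnj (fourier_mode j \<theta>)))"
      by (simp add: cnj_sum sum_distrib_left sum_distrib_right) (rule sum.swap)
    also have "\<dots> = (\<Sum>k\<in>A. \<Sum>j\<in>A. c k * cnj (c j) * fourier_mode (k - j) \<theta>)"
      by (intro sum.cong refl) (simp add: fourier_mode_mult_cnj[symmetric] ac_simps)
    finally show "complex_of_real ((cmod (\<Sum>k\<in>A. c k * fourier_mode k \<theta>))\<^sup>2) = (\<Sum>k\<in>A. \<Sum>j\<in>A. c k * cnj (c j) * fourier_mode (k - j) \<theta>)" .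
  qed
  also have "\<dots> = (\<Sum>k\<in>A. \<Sum>j\<in>A. c k * cnj (c j) * integral cube (fourier_mode (k - j) :: real^'d \<Rightarrow> complex))"
    using A int by (simp add: integral_sum integrable_sum)
  also have "\<dots> = (\<Sum>k\<in>A. c k * cnj (c k) * (2 * pi) ^ CARD('d))"
  proof (intro sum.cong refl)
    fix k assume k: "k \<in> A"
    show "(\<Sum>j\<in>A. c k * cnj (c j) * integral cube (fourier_mode (k - j) :: real^'d \<Rightarrow> complex)) = c k * cnj (c k) * (2 * pi) ^ CARD('d)"
      using A k by (subst sum.remove[of _ k]) (auto simp: integral_fourier_mode eq_iff_diff_eq_0[symmetric] split: if_splits intro!: sum.neutral)
  qed
  also have "\<dots> = complex_of_real ((2 * pi) ^ CARD('d) * (\<Sum>k\<in>A. (cmod (c k))\<^sup>2))"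
    by (simp add: sum_distrib_left sum_distrib_right ac_simps flip: complex_norm_square)
  finally show ?thesis by (simp only: of_real_eq_iff)
qed

section \<open>Square-integrable random variables\<close>

definition L2 :: "'a measure \<Rightarrow> ('a \<Rightarrow> complex) \<Rightarrow> bool" where
  "L2 M U \<longleftrightarrow> U \<in> borel_measurable M \<and> integrable M (\<lambda>\<omega>. (cmod (U \<omega>))\<^sup>2)"

lemma norm_add_square_le: "(norm (x + y))\<^sup>2 \<le> 2 * (norm x)\<^sup>2 + 2 * (norm (y :: 'a::real_normed_vector))\<^sup>2"
proof -
  have "(norm (x + y))\<^sup>2 \<le> (norm x + norm y)\<^sup>2"
    by (simp add: power_mono norm_triangle_ineq)
  also have "\<dots> \<le> 2 * (norm x)\<^sup>2 + 2 * (norm y)\<^sup>2"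
    using sum_squares_bound[of "norm x" "norm y"] by (simp add: power2_sum)
  finally show ?thesis .
qed

lemma L2_add:
  assumes "L2 M U" "L2 M V" shows "L2 M (\<lambda>\<omega>. U \<omega> + V \<omega>)"
proof -
  have "integrable M (\<lambda>\<omega>. (cmod (U \<omega> + V \<omega>))\<^sup>2)"
  proof (rule Bochner_Integration.integrable_bound)
    show "integrable M (\<lambda>\<omega>. 2 * (cmod (U \<omega>))\<^sup>2 + 2 * (cmod (V \<omega>))\<^sup>2)"
      using assms by (auto simp: L2_def)
    show "AE \<omega> in M. norm ((cmod (U \<omega> + V \<omega>))\<^sup>2) \<le> norm (2 * (cmod (U \<omega>))\<^sup>2 + 2 * (cmod (V \<omega>))\<^sup>2)"
      using norm_add_square_le by (auto intro!: AE_I2 simp del: norm_power)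
  qed (use assms in \<open>auto simp: L2_def\<close>)
  then show ?thesis using assms by (auto simp: L2_def)
qed

lemma L2_scale: assumes "L2 M U" shows "L2 M (\<lambda>\<omega>. c * U \<omega>)"
  using assms by (auto simp: L2_def norm_mult power_mult_distrib)

lemma L2_diff: assumes "L2 M U" "L2 M V" shows "L2 M (\<lambda>\<omega>. U \<omega> - V \<omega>)"
  using L2_add[OF assms(1) L2_scale[OF assms(2), of "-1"]] by simp

lemma borel_measurable_cnj [measurable]: "U \<in> borel_measurable M \<Longrightarrow> (\<lambda>\<omega>. cnj (U \<omega>)) \<in> borel_measurable M"
  by (rule borel_measurable_continuous_on[of cnj]) (auto intro: continuous_intros)

lemma L2_cnj: assumes "L2 M U" shows "L2 M (\<lambda>\<omega>. cnj (U \<omega>))"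
  using assms by (auto simp: L2_def)

lemma L2_sum: assumes "\<And>k. k \<in> A \<Longrightarrow> L2 M (U k)" shows "L2 M (\<lambda>\<omega>. \<Sum>k\<in>A. U k \<omega>)"
  using assms
proof (induction A rule: infinite_finite_induct)
  case (insert k A)
  then show ?case by (simp add: L2_add)
qed (simp_all add: L2_def)

lemma amgm_weighted: assumes "t > 0" shows "a * b \<le> (t * a\<^sup>2 + b\<^sup>2 / t) / (2::real)"
proof -
  have "t * a\<^sup>2 + b\<^sup>2 / t - 2 * (a * b) = (t * a - b)\<^sup>2 / t"
    using assms by (simp add: field_simps power2_eq_square)
  moreover have "(t * a - b)\<^sup>2 / t \<ge> 0" using assms by simp
  ultimately show ?thesis by (simp add: field_simps)
qed

lemma L2_prod_int:
  assumes "L2 M U" "L2 M V" shows "integrable M (\<lambda>\<omega>. U \<omega> * V \<omega>)"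
proof -
  have mU: "U \<in> borel_measurable M" and mV: "V \<in> borel_measurable M"
    and iU: "integrable M (\<lambda>\<omega>. (cmod (U \<omega>))\<^sup>2)" and iV: "integrable M (\<lambda>\<omega>. (cmod (V \<omega>))\<^sup>2)"
    using assms by (auto simp: L2_def)
  have i2: "integrable M (\<lambda>\<omega>. (cmod (U \<omega>))\<^sup>2 + (cmod (V \<omega>))\<^sup>2)"
    using iU iV by auto
  show ?thesis
  proof (rule Bochner_Integration.integrable_bound[OF i2])
    show "(\<lambda>\<omega>. U \<omega> * V \<omega>) \<in> borel_measurable M" using mU mV by measurable
    have "cmod (U \<omega> * V \<omega>) \<le> (cmod (U \<omega>))\<^sup>2 + (cmod (V \<omega>))\<^sup>2" for \<omega>
      unfolding norm_mult
      using sum_squares_bound[of "cmod (U \<omega>)" "cmod (V \<omega>)"]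
        mult_nonneg_nonneg[OF norm_ge_zero norm_ge_zero, of "U \<omega>" "V \<omega>"] by linarith
    then show "AE \<omega> in M. norm (U \<omega> * V \<omega>) \<le> norm ((cmod (U \<omega>))\<^sup>2 + (cmod (V \<omega>))\<^sup>2)"
      by (auto intro!: AE_I2 simp del: norm_power)
  qed
qed

lemma norm_integral_mult_le:
  assumes "L2 M U" "L2 M V" "t > 0"
  shows "cmod (\<integral>\<omega>. U \<omega> * V \<omega> \<partial>M) \<le> (t * (\<integral>\<omega>. (cmod (U \<omega>))\<^sup>2 \<partial>M) + (\<integral>\<omega>. (cmod (V \<omega>))\<^sup>2 \<partial>M) / t) / 2"
proof -
  have iU: "integrable M (\<lambda>\<omega>. (cmod (U \<omega>))\<^sup>2)" and iV: "integrable M (\<lambda>\<omega>. (cmod (V \<omega>))\<^sup>2)"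
    using assms by (auto simp: L2_def)
  have "cmod (\<integral>\<omega>. U \<omega> * V \<omega> \<partial>M) \<le> (\<integral>\<omega>. (t * (cmod (U \<omega>))\<^sup>2 + (cmod (V \<omega>))\<^sup>2 / t) / 2 \<partial>M)"
  proof (rule order.trans[OF integral_norm_bound Bochner_Integration.integral_mono])
    show "integrable M (\<lambda>\<omega>. norm (U \<omega> * V \<omega>))" by (rule integrable_norm[OF L2_prod_int[OF assms(1,2)]])
    show "integrable M (\<lambda>\<omega>. (t * (cmod (U \<omega>))\<^sup>2 + (cmod (V \<omega>))\<^sup>2 / t) / 2)"
      using iU iV by auto
    show "norm (U \<omega> * V \<omega>) \<le> (t * (cmod (U \<omega>))\<^sup>2 + (cmod (V \<omega>))\<^sup>2 / t) / 2" for \<omega>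
      using amgm_weighted[OF assms(3), of "cmod (U \<omega>)" "cmod (V \<omega>)"] by (simp add: norm_mult)
  qed
  also have "\<dots> = (t * (\<integral>\<omega>. (cmod (U \<omega>))\<^sup>2 \<partial>M) + (\<integral>\<omega>. (cmod (V \<omega>))\<^sup>2 \<partial>M) / t) / 2"
    using iU iV by simp
  finally show ?thesis .
qed

lemma norm_integral_mult_le_balanced:
  assumes "L2 M U" "L2 M V" "r > 0" "(\<integral>\<omega>. (cmod (U \<omega>))\<^sup>2 \<partial>M) \<le> a / r\<^sup>2" "(\<integral>\<omega>. (cmod (V \<omega>))\<^sup>2 \<partial>M) \<le> b"
  shows "cmod (\<integral>\<omega>. U \<omega> * V \<omega> \<partial>M) \<le> (a + b) / (2 * r)"
proof -
  have "cmod (\<integral>\<omega>. U \<omega> * V \<omega> \<partial>M) \<le> (r * (\<integral>\<omega>. (cmod (U \<omega>))\<^sup>2 \<partial>M) + (\<integral>\<omega>. (cmod (V \<omega>))\<^sup>2 \<partial>M) / r) / 2"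
    by (rule norm_integral_mult_le[OF assms(1-3)])
  also have "\<dots> \<le> (r * (a / r\<^sup>2) + b / r) / 2"
    using assms(3-5) by (intro divide_right_mono add_mono mult_left_mono) auto
  also have "\<dots> = (a + b) / (2 * r)"
    using assms(3) by (simp add: field_simps power2_eq_square)
  finally show ?thesis .
qed

lemma integral_mult_diff:
  assumes "L2 M U" "L2 M U'" "L2 M W" "L2 M W'"
  shows "(\<integral>\<omega>. U' \<omega> * W' \<omega> \<partial>M) - (\<integral>\<omega>. U \<omega> * W \<omega> \<partial>M)
    = (\<integral>\<omega>. (U' \<omega> - U \<omega>) * W' \<omega> \<partial>M) + (\<integral>\<omega>. (W' \<omega> - W \<omega>) * U \<omega> \<partial>M)"
proof -
  have "(\<integral>\<omega>. U' \<omega> * W' \<omega> \<partial>M) - (\<integral>\<omega>. U \<omega> * W \<omega> \<partial>M) = (\<integral>\<omega>. U' \<omega> * W' \<omega> - U \<omega> * W \<omega> \<partial>M)"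
    using assms by (intro Bochner_Integration.integral_diff[symmetric] L2_prod_int)
  also have "\<dots> = (\<integral>\<omega>. (U' \<omega> - U \<omega>) * W' \<omega> + (W' \<omega> - W \<omega>) * U \<omega> \<partial>M)"
    by (simp add: algebra_simps)
  also have "\<dots> = (\<integral>\<omega>. (U' \<omega> - U \<omega>) * W' \<omega> \<partial>M) + (\<integral>\<omega>. (W' \<omega> - W \<omega>) * U \<omega> \<partial>M)"
    using assms by (intro Bochner_Integration.integral_add L2_prod_int L2_diff)
  finally show ?thesis .
qed

lemma integral_sum_mult_sum:
  assumes "finite A" "finite B" "\<And>k. k \<in> A \<Longrightarrow> L2 M (U k)" "\<And>j. j \<in> B \<Longrightarrow> L2 M (V j)"
  shows "(\<integral>\<omega>. (\<Sum>k\<in>A. c k * U k \<omega>) * (\<Sum>j\<in>B. d j * V j \<omega>) \<partial>M)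
       = (\<Sum>k\<in>A. \<Sum>j\<in>B. c k * d j * (\<integral>\<omega>. U k \<omega> * V j \<omega> \<partial>M))"
proof -
  have "(\<integral>\<omega>. (\<Sum>k\<in>A. c k * U k \<omega>) * (\<Sum>j\<in>B. d j * V j \<omega>) \<partial>M)
      = (\<integral>\<omega>. (\<Sum>k\<in>A. \<Sum>j\<in>B. c k * d j * (U k \<omega> * V j \<omega>)) \<partial>M)"
    by (simp add: sum_product ac_simps)
  also have "\<dots> = (\<Sum>k\<in>A. \<Sum>j\<in>B. (\<integral>\<omega>. c k * d j * (U k \<omega> * V j \<omega>) \<partial>M))"
    using assms by (simp add: Bochner_Integration.integral_sum integrable_sum L2_prod_int)
  finally show ?thesis by simp
qed

lemma Gfun_Re: "Gfun m a b z = Re (\<Sum>j=1..m. Complex (a j) (- b j) * z j)"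
  by (simp add: Gfun_def Re_sum)

lemma Re_square: "(Re z)\<^sup>2 = Re (z * cnj z + z * z) / 2"
  by (simp add: power2_eq_square algebra_simps)

lemma integral_Re_sum_sq:
  fixes S :: "nat \<Rightarrow> 'a \<Rightarrow> complex" and \<gamma> :: "nat \<Rightarrow> complex"
  assumes L: "\<And>j. L2 M (S j)" and J: "finite J"
  shows "(\<integral>\<omega>. (Re (\<Sum>j\<in>J. \<gamma> j * S j \<omega>))\<^sup>2 \<partial>M)
    = Re (\<Sum>j\<in>J. \<Sum>l\<in>J. \<gamma> j * cnj (\<gamma> l) * (\<integral>\<omega>. S j \<omega> * cnj (S l \<omega>) \<partial>M) + \<gamma> j * \<gamma> l * (\<integral>\<omega>. S j \<omega> * S l \<omega> \<partial>M)) / 2"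
proof -
  define Z where "Z \<omega> = (\<Sum>j\<in>J. \<gamma> j * S j \<omega>)" for \<omega>
  have LZ: "L2 M Z" unfolding Z_def by (intro L2_sum L2_scale L)
  have "(\<integral>\<omega>. (Re (Z \<omega>))\<^sup>2 \<partial>M) = Re ((\<integral>\<omega>. Z \<omega> * cnj (Z \<omega>) \<partial>M) + (\<integral>\<omega>. Z \<omega> * Z \<omega> \<partial>M)) / 2"
    using LZ by (simp add: Re_square integral_divide_zero L2_prod_int L2_cnj
        flip: integral_Re Bochner_Integration.integral_add)
  also have "(\<integral>\<omega>. Z \<omega> * cnj (Z \<omega>) \<partial>M) = (\<Sum>j\<in>J. \<Sum>l\<in>J. \<gamma> j * cnj (\<gamma> l) * (\<integral>\<omega>. S j \<omega> * cnj (S l \<omega>) \<partial>M))"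
    unfolding Z_def cnj_sum complex_cnj_mult by (rule integral_sum_mult_sum[OF J J]) (auto intro!: L2_cnj L)
  also have "(\<integral>\<omega>. Z \<omega> * Z \<omega> \<partial>M) = (\<Sum>j\<in>J. \<Sum>l\<in>J. \<gamma> j * \<gamma> l * (\<integral>\<omega>. S j \<omega> * S l \<omega> \<partial>M))"
    unfolding Z_def by (rule integral_sum_mult_sum[OF J J]) (auto intro!: L)
  finally show ?thesis by (simp add: Z_def sum.distrib)
qed

lemma normalized_integral_Gfun_square:
  fixes Z :: "nat \<Rightarrow> 'a \<Rightarrow> complex"
  assumes L: "\<And>j. L2 M (Z j)"
  shows "(1 / V) * (\<integral>\<omega>. (Gfun m a b (\<lambda>j. Z j \<omega>))\<^sup>2 \<partial>M)
    = Re (\<Sum>j=1..m. \<Sum>l=1..m. Complex (a j) (- b j) * cnj (Complex (a l) (- b l))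
            * ((\<integral>\<omega>. Z j \<omega> * cnj (Z l \<omega>) \<partial>M) / complex_of_real V)
          + Complex (a j) (- b j) * Complex (a l) (- b l) * ((\<integral>\<omega>. Z j \<omega> * Z l \<omega> \<partial>M) / complex_of_real V)) / 2"
proof -
  have "(\<integral>\<omega>. (Gfun m a b (\<lambda>j. Z j \<omega>))\<^sup>2 \<partial>M)
      = Re (\<Sum>j=1..m. \<Sum>l=1..m. Complex (a j) (- b j) * cnj (Complex (a l) (- b l)) * (\<integral>\<omega>. Z j \<omega> * cnj (Z l \<omega>) \<partial>M)
          + Complex (a j) (- b j) * Complex (a l) (- b l) * (\<integral>\<omega>. Z j \<omega> * Z l \<omega> \<partial>M)) / 2" (is "_ = Re ?E / 2")
    unfolding Gfun_Re by (rule integral_Re_sum_sq[OF L]) simp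
  moreover have "(1 / V) * (Re z / 2) = Re (z / complex_of_real V) / 2" for z
    by (simp add: Re_divide_of_real)
  ultimately have "(1 / V) * (\<integral>\<omega>. (Gfun m a b (\<lambda>j. Z j \<omega>))\<^sup>2 \<partial>M) = Re (?E / complex_of_real V) / 2"
    by (simp only:)
  then show ?thesis
    by (simp only: sum_divide_distrib add_divide_distrib times_divide_eq_right)
qed

lemma Re_sum_diagonal:
  assumes "finite J"
  shows "Re (\<Sum>j\<in>J. \<Sum>l\<in>J. if j = l then Complex (a j) (- b j) * cnj (Complex (a l) (- b l)) * complex_of_real F else 0)
    = F * (\<Sum>j\<in>J. (a j)\<^sup>2 + (b j)\<^sup>2)"
  using assms by (simp add: Re_sum sum_distrib_left power2_eq_square algebra_simps)

section \<open>Stationarity\<close>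

lemma measurable_shifted_restrict:
  assumes meas: "\<And>k. X k \<in> borel_measurable M" and "finite S"
  shows "(\<lambda>\<omega>. \<lambda>k\<in>S. X (k + h) \<omega>) \<in> measurable M (Pi\<^sub>M S (\<lambda>_. (borel :: complex measure)))"
  using meas by (auto intro!: measurable_restrict)

lemma stationary_integral:
  fixes X :: "int^'d::finite \<Rightarrow> 'a \<Rightarrow> complex"
    and g :: "(int^'d \<Rightarrow> complex) \<Rightarrow> 'b::{banach,second_countable_topology}"
  assumes stat: "strictly_stationary M X" and meas: "\<And>k. X k \<in> borel_measurable M" and S: "finite S"
    and g: "g \<in> borel_measurable (Pi\<^sub>M S (\<lambda>_. (borel :: complex measure)))"
  shows "(\<integral>\<omega>. g (\<lambda>k\<in>S. X (k + h) \<omega>) \<partial>M) = (\<integral>\<omega>. g (\<lambda>k\<in>S. X k \<omega>) \<partial>M)"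
    and "integrable M (\<lambda>\<omega>. g (\<lambda>k\<in>S. X (k + h) \<omega>)) = integrable M (\<lambda>\<omega>. g (\<lambda>k\<in>S. X k \<omega>))"
proof -
  have d: "distr M (Pi\<^sub>M S (\<lambda>_. (borel :: complex measure))) (\<lambda>\<omega>. \<lambda>k\<in>S. X (k + h) \<omega>)
      = distr M (Pi\<^sub>M S (\<lambda>_. (borel :: complex measure))) (\<lambda>\<omega>. \<lambda>k\<in>S. X k \<omega>)"
    using stat S unfolding strictly_stationary_def by blast
  have m1: "(\<lambda>\<omega>. \<lambda>k\<in>S. X (k + h) \<omega>) \<in> measurable M (Pi\<^sub>M S (\<lambda>_. (borel :: complex measure)))"
    by (rule measurable_shifted_restrict[OF meas S])
  have m0: "(\<lambda>\<omega>. \<lambda>k\<in>S. X k \<omega>) \<in> measurable M (Pi\<^sub>M S (\<lambda>_. (borel :: complex measure)))"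
    using measurable_shifted_restrict[OF meas S, where h=0] by simp
  show "(\<integral>\<omega>. g (\<lambda>k\<in>S. X (k + h) \<omega>) \<partial>M) = (\<integral>\<omega>. g (\<lambda>k\<in>S. X k \<omega>) \<partial>M)"
    using integral_distr[OF m1 g] integral_distr[OF m0 g] d by simp
  show "integrable M (\<lambda>\<omega>. g (\<lambda>k\<in>S. X (k + h) \<omega>)) = integrable M (\<lambda>\<omega>. g (\<lambda>k\<in>S. X k \<omega>))"
    using integrable_distr_eq[OF m1 g] integrable_distr_eq[OF m0 g] d by simp
qed

lemma stationary_L2:
  fixes X :: "int^'d::finite \<Rightarrow> 'a \<Rightarrow> complex"
  assumes stat: "strictly_stationary M X" and meas: "\<And>k. X k \<in> borel_measurable M"
    and sq: "integrable M (\<lambda>\<omega>. (norm (X 0 \<omega>))\<^sup>2)"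
  shows "L2 M (X k)"
proof -
  have g: "(\<lambda>x. (norm (x 0))\<^sup>2 :: real) \<in> borel_measurable (Pi\<^sub>M {0} (\<lambda>_. (borel :: complex measure)))"
    by measurable
  have "integrable M (\<lambda>\<omega>. (\<lambda>x. (norm (x 0))\<^sup>2) (\<lambda>l\<in>{0}. X (l + k) \<omega>))
      = integrable M (\<lambda>\<omega>. (\<lambda>x. (norm (x 0))\<^sup>2) (\<lambda>l\<in>{0::int^'d}. X l \<omega>))"
    by (rule stationary_integral(2)[OF stat meas _ g]) simp
  then show ?thesis using sq meas by (simp add: L2_def)
qed

lemma stationary_pseudo_covariance:
  fixes X :: "int^'d::finite \<Rightarrow> 'a \<Rightarrow> complex"
  assumes stat: "strictly_stationary M X" and meas: "\<And>k. X k \<in> borel_measurable M"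
  shows "(\<integral>\<omega>. X (k + h) \<omega> * X (j + h) \<omega> \<partial>M) = (\<integral>\<omega>. X k \<omega> * X j \<omega> \<partial>M)"
proof -
  have g: "(\<lambda>x. x k * x j :: complex) \<in> borel_measurable (Pi\<^sub>M {k, j} (\<lambda>_. (borel :: complex measure)))"
    by measurable
  have "(\<integral>\<omega>. (\<lambda>x. x k * x j) (\<lambda>l\<in>{k,j}. X (l + h) \<omega>) \<partial>M)
      = (\<integral>\<omega>. (\<lambda>x. x k * x j) (\<lambda>l\<in>{k,j}. X l \<omega>) \<partial>M)"
    by (rule stationary_integral(1)[OF stat meas _ g]) simp
  then show ?thesis by simp
qed

section \<open>Blocks\<close>

definition int_box :: "('d::finite \<Rightarrow> int set) \<Rightarrow> (int^'d) set" where
  "int_box I = {k. \<forall>u. k$u \<in> I u}"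

lemma bij_int_box: "bij_betw vec_nth (int_box I) (Pi\<^sub>E UNIV I)"
proof (rule bij_betw_byWitness[where f'=vec_lambda])
  show "\<forall>a\<in>int_box I. vec_lambda (vec_nth a) = a" by simp
  show "\<forall>a'\<in>Pi\<^sub>E UNIV I. vec_nth (vec_lambda a') = a'" by (simp add: vec_lambda_inverse)
  show "vec_nth ` int_box I \<subseteq> Pi\<^sub>E UNIV I" by (auto simp: int_box_def)
  show "vec_lambda ` Pi\<^sub>E UNIV I \<subseteq> int_box I" by (auto simp: int_box_def)
qed

lemma card_int_box: "card (int_box I) = (\<Prod>u\<in>UNIV. card (I u))"
  using bij_betw_same_card[OF bij_int_box[of I]] by (simp add: card_PiE)

lemma finite_int_box: "(\<And>u. finite (I u)) \<Longrightarrow> finite (int_box I)"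
  using bij_betw_finite[OF bij_int_box[of I]] by (simp add: finite_PiE)

lemma block_int_box: "block v w = int_box (\<lambda>u. {w$u + 1 .. w$u + int (v$u)})"
proof -
  have "k \<in> block v w \<longleftrightarrow> (\<forall>u. w$u + 1 \<le> k$u \<and> k$u \<le> w$u + int (v$u))" for k
  proof
    assume "k \<in> block v w"
    then show "\<forall>u. w$u + 1 \<le> k$u \<and> k$u \<le> w$u + int (v$u)" by (auto simp: block_def)
  next
    assume a: "\<forall>u. w$u + 1 \<le> k$u \<and> k$u \<le> w$u + int (v$u)"
    have "\<forall>u. 1 \<le> (k - w)$u \<and> (k - w)$u \<le> int (v$u)"
    proof
      fix u
      from a have "w$u + 1 \<le> k$u" "k$u \<le> w$u + int (v$u)" by auto
      then show "1 \<le> (k - w)$u \<and> (k - w)$u \<le> int (v$u)" by simp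
    qed
    then show "k \<in> block v w" unfolding block_def
      by (intro CollectI exI[of _ "k - w"]) simp
  qed
  then show ?thesis by (auto simp: int_box_def)
qed

lemma finite_block [simp]: "finite (block v w)"
  by (simp add: block_int_box finite_int_box)

lemma card_block: "card (block v w) = (\<Prod>u\<in>UNIV. v$u)"
  by (simp add: block_int_box card_int_box)

lemma block_shift: "block v w = (\<lambda>k. k + w) ` block v 0"
  by (auto simp: block_def image_def)

lemma mem_block: "k \<in> block v w \<longleftrightarrow> (\<forall>u. w$u + 1 \<le> k$u \<and> k$u \<le> w$u + int (v$u))"
  by (simp add: block_int_box int_box_def)

lemma mem_block_split:
  "k \<in> block v w \<longleftrightarrow> (\<forall>u. u \<noteq> s \<longrightarrow> w$u + 1 \<le> k$u \<and> k$u \<le> w$u + int (v$u))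
      \<and> w$s + 1 \<le> k$s \<and> k$s \<le> w$s + int (v$s)"
  unfolding mem_block by metis

lemma block_shift_diff:
  fixes v :: "nat^'d::finite"
  assumes "v$s \<ge> 1"
  shows "block v (w + axis s 1) - block v w
     = int_box (\<lambda>u. if u = s then {w$s + int (v$s) + 1} else {w$u + 1 .. w$u + int (v$u)})"
proof -
  have e: "(w + axis s 1)$u = w$u + (if u = s then 1 else 0)" for u
    by (simp add: axis_def)
  show ?thesis
  proof (rule set_eqI)
    fix k
    define P where "P = (\<forall>u. u \<noteq> s \<longrightarrow> w$u + 1 \<le> k$u \<and> k$u \<le> w$u + int (v$u))"
    have B': "k \<in> block v (w + axis s 1) \<longleftrightarrow> P \<and> w$s + 2 \<le> k$s \<and> k$s \<le> w$s + int (v$s) + 1"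
      unfolding mem_block_split[of _ _ _ s] P_def e by auto
    have B: "k \<in> block v w \<longleftrightarrow> P \<and> w$s + 1 \<le> k$s \<and> k$s \<le> w$s + int (v$s)"
      unfolding mem_block_split[of _ _ _ s] P_def by auto
    have R: "k \<in> int_box (\<lambda>u. if u = s then {w$s + int (v$s) + 1} else {w$u + 1 .. w$u + int (v$u)}) \<longleftrightarrow> P \<and> k$s = w$s + int (v$s) + 1"
      unfolding int_box_def P_def by (auto split: if_splits)
    show "k \<in> block v (w + axis s 1) - block v w \<longleftrightarrow> k \<in> int_box (\<lambda>u. if u = s then {w$s + int (v$s) + 1} else {w$u + 1 .. w$u + int (v$u)})"
      unfolding Diff_iff B' B R using assms by auto
  qed
qed

lemma block_diff_shift:
  fixes v :: "nat^'d::finite"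
  assumes "v$s \<ge> 1"
  shows "block v w - block v (w + axis s 1)
     = int_box (\<lambda>u. if u = s then {w$s + 1} else {w$u + 1 .. w$u + int (v$u)})"
proof -
  have e: "(w + axis s 1)$u = w$u + (if u = s then 1 else 0)" for u
    by (simp add: axis_def)
  show ?thesis
  proof (rule set_eqI)
    fix k
    define P where "P = (\<forall>u. u \<noteq> s \<longrightarrow> w$u + 1 \<le> k$u \<and> k$u \<le> w$u + int (v$u))"
    have B': "k \<in> block v (w + axis s 1) \<longleftrightarrow> P \<and> w$s + 2 \<le> k$s \<and> k$s \<le> w$s + int (v$s) + 1"
      unfolding mem_block_split[of _ _ _ s] P_def e by auto
    have B: "k \<in> block v w \<longleftrightarrow> P \<and> w$s + 1 \<le> k$s \<and> k$s \<le> w$s + int (v$s)"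
      unfolding mem_block_split[of _ _ _ s] P_def by auto
    have R: "k \<in> int_box (\<lambda>u. if u = s then {w$s + 1} else {w$u + 1 .. w$u + int (v$u)}) \<longleftrightarrow> P \<and> k$s = w$s + 1"
      unfolding int_box_def P_def by (auto split: if_splits)
    show "k \<in> block v w - block v (w + axis s 1) \<longleftrightarrow> k \<in> int_box (\<lambda>u. if u = s then {w$s + 1} else {w$u + 1 .. w$u + int (v$u)})"
      unfolding Diff_iff B' B R using assms by auto
  qed
qed

lemma card_int_box_slab:
  fixes v :: "nat^'d::finite"
  shows "card (int_box (\<lambda>u. if u = s then {c} else {w$u + 1 .. w$u + int (v$u)})) = (\<Prod>u\<in>UNIV-{s}. v$u)"
  unfolding card_int_box by (subst prod.remove[of _ s]) (auto intro!: prod.cong)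

lemma real_card_int_box_slab:
  fixes v :: "nat^'d::finite"
  assumes "v$s \<ge> 1"
  shows "real (card (int_box (\<lambda>u. if u = s then {c} else {w$u + 1 .. w$u + int (v$u)}))) = real (\<Prod>u\<in>UNIV. v$u) / real (v$s)"
  using assms unfolding card_int_box_slab by (subst (2) prod.remove[of _ s]) auto

lemma block_translate: "block v (w + e) = (\<lambda>k. k + e) ` block v w"
  unfolding block_shift[of v "w + e"] block_shift[of v w] image_image by (simp add: add.assoc)

lemma sum_diff_sum:
  assumes "finite A" "finite B"
  shows "(\<Sum>k\<in>A. g k) - (\<Sum>k\<in>B. g k) = (\<Sum>k\<in>A - B. g k) - (\<Sum>k\<in>B - A. (g k :: complex))"
proof -
  have "(\<Sum>k\<in>A. g k) = (\<Sum>k\<in>A - B. g k) + (\<Sum>k\<in>A \<inter> B. g k)"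
    using sum.Int_Diff[OF assms(1), of g B] by simp
  moreover have "(\<Sum>k\<in>B. g k) = (\<Sum>k\<in>B - A. g k) + (\<Sum>k\<in>A \<inter> B. g k)"
    using sum.Int_Diff[OF assms(2), of g A] by (simp add: Int_commute)
  ultimately show ?thesis by simp
qed

lemma card_Icc_Int_shift: "card ({1..v} \<inter> {1 - h..v - h}) = nat (v - \<bar>h\<bar>)" for v h :: int
proof -
  have "{1..v} \<inter> {1 - h..v - h} = {max 1 (1 - h) .. min v (v - h)}" by auto
  moreover have "min v (v - h) - max 1 (1 - h) + 1 = v - \<bar>h\<bar>" by (auto simp: min_def max_def abs_if)
  ultimately show ?thesis by simp
qed

lemma card_overlap:
  fixes v :: "nat^'d::finite"
  shows "card {k\<in>block v 0. k + h \<in> block v 0} = (\<Prod>u\<in>UNIV. nat (int (v$u) - \<bar>h$u\<bar>))"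
proof -
  have pt: "(1 \<le> k$u \<and> k$u \<le> int (v$u)) \<and> (1 \<le> k$u + h$u \<and> k$u + h$u \<le> int (v$u))
      \<longleftrightarrow> k$u \<in> {1..int (v$u)} \<inter> {1 - h$u .. int (v$u) - h$u}" for k u by auto
  have "{k\<in>block v 0. k + h \<in> block v 0} = int_box (\<lambda>u. {1..int (v$u)} \<inter> {1 - h$u .. int (v$u) - h$u})"
    unfolding set_eq_iff mem_Collect_eq mem_block int_box_def
    by (simp only: zero_index vector_add_component add_0 add.commute[of 0] all_conj_distrib[symmetric] pt) blast
  then show ?thesis by (simp only: card_int_box card_Icc_Int_shift)
qed

section \<open>Twisted sums and Fejer kernels\<close>

definition twist :: "real^'d::finite \<Rightarrow> int^'d \<Rightarrow> complex" where
  "twist \<mu> k = exp (- \<i> * complex_of_real (\<Sum>u\<in>UNIV. real_of_int (k$u) * \<mu>$u))"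

lemma twisted_sum_twist: "twisted_sum X \<mu> S \<omega> = (\<Sum>k\<in>S. twist \<mu> k * X k \<omega>)"
  by (simp add: twisted_sum_def twist_def)

lemma twist_add: "twist \<mu> (k + j) = twist \<mu> k * twist \<mu> j"
  by (simp add: twist_def sum.distrib distrib_right algebra_simps flip: exp_add)

lemma norm_twist [simp]: "cmod (twist \<mu> k) = 1"
proof -
  have "twist \<mu> k = exp (\<i> * complex_of_real (- (\<Sum>u\<in>UNIV. real_of_int (k$u) * \<mu>$u)))"
    by (simp add: twist_def)
  then show ?thesis by (simp only: norm_exp_i_times)
qed

lemma twist_cnj: "cnj (twist \<mu> h) = fourier_mode h \<mu>"
  by (simp add: twist_def fourier_mode_def exp_cnj)

lemma twist_cnj_mult: "twist \<mu> k * cnj (twist \<mu> (k + h)) = fourier_mode h \<mu>"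
proof -
  have "twist \<mu> k * cnj (twist \<mu> k) = 1"
    using norm_twist[of \<mu> k] by (metis complex_norm_square of_real_1 power_one)
  then show ?thesis by (simp add: twist_add twist_cnj[symmetric] mult.assoc[symmetric])
qed

lemma twist_axis: "twist \<mu> (axis s 1) = exp (- \<i> * complex_of_real (\<mu>$s))"
proof -
  have "(\<Sum>u\<in>UNIV. real_of_int (axis s 1 $ u) * \<mu>$u) = \<mu>$s"
    by (subst sum.remove[of _ s]) (auto simp: axis_def intro!: sum.neutral)
  then show ?thesis by (simp add: twist_def)
qed

lemma L2_twisted:
  assumes "\<And>k. L2 M (X k)" shows "L2 M (twisted_sum X \<mu> S)"
  unfolding twisted_sum_def by (intro L2_sum L2_scale assms)

text \<open>\<open>\<phi>\<close> is the identity or complex conjugation: this treats pseudo-covariances and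
  covariances at once.\<close>

lemma moment_block_shift:
  fixes X :: "int^'d::finite \<Rightarrow> 'a \<Rightarrow> complex"
  assumes L2X: "\<And>k. L2 M (X k)"
    and phm: "\<And>a b. \<phi> (a * b) = \<phi> a * \<phi> b" and pha: "\<And>a b. \<phi> (a + b) = \<phi> a + \<phi> b" and ph0: "\<phi> 0 = 0"
    and phL2: "\<And>U. L2 M U \<Longrightarrow> L2 M (\<lambda>\<omega>. \<phi> (U \<omega>))"
    and inv: "\<And>k j. (\<integral>\<omega>. X (k + e) \<omega> * \<phi> (X (j + e) \<omega>) \<partial>M) = (\<integral>\<omega>. X k \<omega> * \<phi> (X j \<omega>) \<partial>M)"
  shows "(\<integral>\<omega>. twisted_sum X \<mu> (block v (w + e)) \<omega> * \<phi> (twisted_sum X \<mu>' (block v (w + e)) \<omega>) \<partial>M)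
       = twist \<mu> e * \<phi> (twist \<mu>' e) * (\<integral>\<omega>. twisted_sum X \<mu> (block v w) \<omega> * \<phi> (twisted_sum X \<mu>' (block v w) \<omega>) \<partial>M)"
proof -
  let ?B = "block v w"
  have inj: "inj_on (\<lambda>k. k + e) ?B" by (auto simp: inj_on_def)
  have shifted: "twisted_sum X \<mu> (block v (w + e)) \<omega> = (\<Sum>k\<in>?B. twist \<mu> (k + e) * X (k + e) \<omega>)" for \<mu> \<omega>
    unfolding twisted_sum_twist block_translate by (simp add: sum.reindex[OF inj])
  have \<phi>_sum: "\<phi> (\<Sum>k\<in>A. g k) = (\<Sum>k\<in>A. \<phi> (g k))" for A and g :: "int^'d \<Rightarrow> complex"
    by (rule sum_comp_morphism[OF ph0 pha, unfolded o_def, symmetric])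
  have "(\<integral>\<omega>. twisted_sum X \<mu> (block v (w + e)) \<omega> * \<phi> (twisted_sum X \<mu>' (block v (w + e)) \<omega>) \<partial>M)
      = (\<Sum>k\<in>?B. \<Sum>j\<in>?B. twist \<mu> (k + e) * \<phi> (twist \<mu>' (j + e)) * (\<integral>\<omega>. X (k + e) \<omega> * \<phi> (X (j + e) \<omega>) \<partial>M))"
    unfolding shifted \<phi>_sum phm by (rule integral_sum_mult_sum) (auto intro!: L2X phL2)
  also have "\<dots> = twist \<mu> e * \<phi> (twist \<mu>' e)
      * (\<Sum>k\<in>?B. \<Sum>j\<in>?B. twist \<mu> k * \<phi> (twist \<mu>' j) * (\<integral>\<omega>. X k \<omega> * \<phi> (X j \<omega>) \<partial>M))"
    by (simp add: inv twist_add phm sum_distrib_left ac_simps)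
  also have "(\<Sum>k\<in>?B. \<Sum>j\<in>?B. twist \<mu> k * \<phi> (twist \<mu>' j) * (\<integral>\<omega>. X k \<omega> * \<phi> (X j \<omega>) \<partial>M))
      = (\<integral>\<omega>. twisted_sum X \<mu> ?B \<omega> * \<phi> (twisted_sum X \<mu>' ?B \<omega>) \<partial>M)"
    unfolding twisted_sum_twist \<phi>_sum phm
    by (rule integral_sum_mult_sum[symmetric]) (auto intro!: L2X phL2)
  finally show ?thesis .
qed

text \<open>For a block \<open>B\<close> this is \<open>|B|\<close> times the Fejer kernel of \<open>B\<close>, centred at \<open>\<mu>\<close>.\<close>

definition fejer_kernel :: "(int^'d::finite) set \<Rightarrow> real^'d \<Rightarrow> real^'d \<Rightarrow> real" where
  "fejer_kernel B \<mu> \<theta> = (cmod (\<Sum>k\<in>B. twist \<mu> k * fourier_mode k \<theta>))\<^sup>2"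

lemma continuous_on_fejer_kernel [continuous_intros]: "continuous_on S (fejer_kernel B \<mu>)"
  unfolding fejer_kernel_def by (intro continuous_intros)

lemma fejer_kernel_nonneg: "fejer_kernel B \<mu> \<theta> \<ge> 0"
  by (simp add: fejer_kernel_def)

lemma fejer_kernel_block_shift: "fejer_kernel (block v w) \<mu> \<theta> = fejer_kernel (block v 0) \<mu> \<theta>"
proof -
  have inj: "inj_on (\<lambda>k. k + w) (block v 0)" by (auto simp: inj_on_def)
  have "(\<Sum>k\<in>block v w. twist \<mu> k * fourier_mode k \<theta>) = (\<Sum>k\<in>block v 0. twist \<mu> (k + w) * fourier_mode (k + w) \<theta>)"
    unfolding block_shift[of v w] by (simp add: sum.reindex[OF inj])
  also have "\<dots> = twist \<mu> w * fourier_mode w \<theta> * (\<Sum>k\<in>block v 0. twist \<mu> k * fourier_mode k \<theta>)"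
    unfolding sum_distrib_left by (intro sum.cong refl) (simp only: twist_add fourier_mode_mult[symmetric] mult_ac)
  finally show ?thesis unfolding fejer_kernel_def by (simp add: norm_mult)
qed

lemma integral_fejer_kernel:
  fixes v :: "nat^'d::finite"
  shows "integral cube (fejer_kernel (block v w) \<mu>) = (2 * pi) ^ CARD('d) * real (\<Prod>u\<in>UNIV. v$u)"
  unfolding fejer_kernel_def by (simp add: integral_cube_norm_trig_sum card_block)

lemma integral_fejer_kernel_fourier_mode:
  fixes B :: "(int^'d::finite) set"
  assumes B: "finite B"
  shows "integral cube (\<lambda>\<theta>. complex_of_real (fejer_kernel B \<mu> \<theta>) * fourier_mode h \<theta>)
       = (2 * pi) ^ CARD('d) * fourier_mode h \<mu> * of_nat (card {k\<in>B. k + h \<in> B})"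
proof -
  let ?D = "complex_of_real ((2 * pi) ^ CARD('d))"
  have int: "(\<lambda>\<theta>::real^'d. twist \<mu> k * cnj (twist \<mu> j) * fourier_mode (k - j + h) \<theta>) integrable_on cube" for k j
    by (intro integrable_continuous continuous_intros)
  have "(\<lambda>\<theta>. complex_of_real (fejer_kernel B \<mu> \<theta>) * fourier_mode h \<theta>) = (\<lambda>\<theta>. \<Sum>k\<in>B. \<Sum>j\<in>B. twist \<mu> k * cnj (twist \<mu> j) * fourier_mode (k - j + h) \<theta>)"
  proof
    fix \<theta> :: "real^'d"
    have "complex_of_real (fejer_kernel B \<mu> \<theta>) = (\<Sum>k\<in>B. twist \<mu> k * fourier_mode k \<theta>) * cnj (\<Sum>k\<in>B. twist \<mu> k * fourier_mode k \<theta>)"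
      unfolding fejer_kernel_def by (simp only: complex_norm_square)
    also have "\<dots> = (\<Sum>k\<in>B. \<Sum>j\<in>B. (twist \<mu> k * fourier_mode k \<theta>) * (cnj (twist \<mu> j) * cnj (fourier_mode j \<theta>)))"
      by (simp add: cnj_sum sum_distrib_left sum_distrib_right) (rule sum.swap)
    finally have "complex_of_real (fejer_kernel B \<mu> \<theta>) * fourier_mode h \<theta> = (\<Sum>k\<in>B. \<Sum>j\<in>B. (twist \<mu> k * fourier_mode k \<theta>) * (cnj (twist \<mu> j) * cnj (fourier_mode j \<theta>)) * fourier_mode h \<theta>)"
      by (simp add: sum_distrib_right)
    also have "\<dots> = (\<Sum>k\<in>B. \<Sum>j\<in>B. twist \<mu> k * cnj (twist \<mu> j) * fourier_mode (k - j + h) \<theta>)"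
      by (intro sum.cong refl) (simp add: fourier_mode_mult_cnj[symmetric] fourier_mode_mult[symmetric] ac_simps)
    finally show "complex_of_real (fejer_kernel B \<mu> \<theta>) * fourier_mode h \<theta> = (\<Sum>k\<in>B. \<Sum>j\<in>B. twist \<mu> k * cnj (twist \<mu> j) * fourier_mode (k - j + h) \<theta>)" .
  qed
  then have "integral cube (\<lambda>\<theta>. complex_of_real (fejer_kernel B \<mu> \<theta>) * fourier_mode h \<theta>)
     = (\<Sum>k\<in>B. \<Sum>j\<in>B. twist \<mu> k * cnj (twist \<mu> j) * integral cube (fourier_mode (k - j + h) :: real^'d \<Rightarrow> complex))"
    using B int by (simp add: integral_sum integrable_sum)
  also have "\<dots> = (\<Sum>k\<in>B. if k + h \<in> B then ?D * fourier_mode h \<mu> else 0)"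
  proof (intro sum.cong refl)
    fix k assume "k \<in> B"
    have "(\<Sum>j\<in>B. twist \<mu> k * cnj (twist \<mu> j) * integral cube (fourier_mode (k - j + h) :: real^'d \<Rightarrow> complex))
        = (\<Sum>j\<in>B. if j = k + h then twist \<mu> k * cnj (twist \<mu> (k + h)) * ?D else 0)"
    proof (intro sum.cong refl)
      fix j
      have "k - j + h = 0 \<longleftrightarrow> j = k + h"
        by (auto simp: diff_add_eq right_minus_eq)
      then show "twist \<mu> k * cnj (twist \<mu> j) * integral cube (fourier_mode (k - j + h) :: real^'d \<Rightarrow> complex)
          = (if j = k + h then twist \<mu> k * cnj (twist \<mu> (k + h)) * ?D else 0)"
        by (auto simp: integral_fourier_mode)
    qed
    also have "\<dots> = (if k + h \<in> B then ?D * fourier_mode h \<mu> else 0)"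
      using B by (simp add: sum.delta' twist_cnj_mult mult.commute)
    finally show "(\<Sum>j\<in>B. twist \<mu> k * cnj (twist \<mu> j) * integral cube (fourier_mode (k - j + h) :: real^'d \<Rightarrow> complex))
       = (if k + h \<in> B then ?D * fourier_mode h \<mu> else 0)" .
  qed
  also have "\<dots> = (\<Sum>k\<in>{k\<in>B. k + h \<in> B}. ?D * fourier_mode h \<mu>)"
    by (rule sum.inter_filter[symmetric, OF B])
  also have "\<dots> = (2 * pi) ^ CARD('d) * fourier_mode h \<mu> * of_nat (card {k\<in>B. k + h \<in> B})"
    by (simp add: mult_ac)
  finally show ?thesis .
qed

lemma tendsto_nat_diff_ratio:
  fixes x :: "nat \<Rightarrow> nat" and c :: int
  assumes "filterlim x at_top sequentially"
  shows "(\<lambda>n. real (nat (int (x n) - \<bar>c\<bar>)) / real (x n)) \<longlonglongrightarrow> 1"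
proof -
  have ev: "eventually (\<lambda>n. x n \<ge> nat \<bar>c\<bar> + 1) sequentially"
    using assms by (simp add: filterlim_at_top)
  have xr: "filterlim (\<lambda>n. real (x n)) at_top sequentially"
    by (rule filterlim_compose[OF filterlim_real_sequentially assms])
  have "(\<lambda>n. 1 - real_of_int \<bar>c\<bar> * inverse (real (x n))) \<longlonglongrightarrow> 1 - real_of_int \<bar>c\<bar> * 0"
    by (intro tendsto_intros tendsto_inverse_0_at_top xr)
  then have l: "(\<lambda>n. 1 - real_of_int \<bar>c\<bar> * inverse (real (x n))) \<longlonglongrightarrow> 1" by simp
  show ?thesis
  proof (rule Lim_transform_eventually[OF l])
    show "\<forall>\<^sub>F n in sequentially. 1 - real_of_int \<bar>c\<bar> * inverse (real (x n)) = real (nat (int (x n) - \<bar>c\<bar>)) / real (x n)"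
      using ev
    proof eventually_elim
      case (elim n)
      then have "int (x n) - \<bar>c\<bar> \<ge> 0" "x n > 0" by auto
      then show ?case by (simp add: field_simps of_nat_diff)
    qed
  qed
qed

lemma fejer_kernel_fourier_mode_limit:
  fixes v :: "nat \<Rightarrow> nat^'d::finite" and \<mu> :: "nat \<Rightarrow> real^'d"
  assumes vlim: "\<And>u. filterlim (\<lambda>n. v n $ u) at_top sequentially" and vpos: "\<And>n u. v n $ u \<ge> 1"
    and mlim: "\<mu> \<longlonglongrightarrow> lam"
  shows "(\<lambda>n. integral cube (\<lambda>\<theta>. complex_of_real (fejer_kernel (block (v n) 0) (\<mu> n) \<theta>) * fourier_mode h \<theta>)
           / complex_of_real ((2 * pi) ^ CARD('d) * real (\<Prod>u\<in>UNIV. v n $ u))) \<longlonglongrightarrow> fourier_mode h lam"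
proof -
  have eq: "integral cube (\<lambda>\<theta>. complex_of_real (fejer_kernel (block (v n) 0) (\<mu> n) \<theta>) * fourier_mode h \<theta>)
           / complex_of_real ((2 * pi) ^ CARD('d) * real (\<Prod>u\<in>UNIV. v n $ u))
      = fourier_mode h (\<mu> n) * of_real (\<Prod>u\<in>UNIV. real (nat (int (v n $ u) - \<bar>h$u\<bar>)) / real (v n $ u))" for n
  proof -
    have pos: "real (\<Prod>u\<in>UNIV. v n $ u) \<noteq> 0" using vpos[of n] by (auto simp: prod_zero_iff Suc_le_eq)
    show ?thesis
      unfolding integral_fejer_kernel_fourier_mode[OF finite_block] card_overlap
      using pos by (simp add: prod_dividef field_simps)
  qed
  have l1: "(\<lambda>n. fourier_mode h (\<mu> n)) \<longlonglongrightarrow> fourier_mode h lam"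
    unfolding fourier_mode_def by (intro tendsto_intros mlim)
  have l2: "(\<lambda>n. \<Prod>u\<in>UNIV. real (nat (int (v n $ u) - \<bar>h$u\<bar>)) / real (v n $ u)) \<longlonglongrightarrow> (\<Prod>u\<in>(UNIV::'d set). 1)"
    by (intro tendsto_prod tendsto_nat_diff_ratio vlim)
  show ?thesis
    unfolding eq using tendsto_mult[OF l1 tendsto_of_real[OF l2]] by simp
qed

section \<open>Trigonometric polynomials on the torus\<close>

lemma cis_torus: "(\<chi> u. cis (\<theta>$u)) \<in> torus"
  by (simp add: torus_def)

lemma torus_nonzero: "z \<in> torus \<Longrightarrow> z$u \<noteq> 0"
  by (auto simp: torus_def) (metis norm_zero zero_neq_one)

definition trig_monomial :: "int^'d::finite \<Rightarrow> complex^'d \<Rightarrow> complex" where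
  "trig_monomial h z = (\<Prod>u\<in>UNIV. (z$u) powi (h$u))"

text \<open>Products and conjugates of trigonometric polynomials are again trigonometric
  polynomials only on the torus, hence the weak closure statements below.\<close>

inductive_set trig_polys :: "(complex^'d::finite \<Rightarrow> complex) set" where
  zero: "(\<lambda>z. 0) \<in> trig_polys"
| add_monomial: "Q \<in> trig_polys \<Longrightarrow> (\<lambda>z. Q z + c * trig_monomial h z) \<in> trig_polys"

lemma trig_monomial_cis: "trig_monomial h (\<chi> u. cis (\<theta>$u)) = fourier_mode h \<theta>"
  unfolding trig_monomial_def fourier_mode_prod
  by (intro prod.cong refl) (simp only: vec_lambda_beta cis_power_int, simp add: cis_conv_exp)

lemma trig_monomial_mult: "z \<in> torus \<Longrightarrow> trig_monomial h z * trig_monomial h' z = trig_monomial (h + h') z"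
  by (simp add: trig_monomial_def prod.distrib[symmetric] power_int_add torus_nonzero)

lemma trig_monomial_cnj:
  assumes "z \<in> torus" shows "cnj (trig_monomial h z) = trig_monomial (- h) z"
proof -
  have "cnj (z$u) = inverse (z$u)" for u
  proof -
    have "norm (z$u) = 1" using assms by (simp add: torus_def)
    then have "z$u * cnj (z$u) = 1" by (metis complex_norm_square of_real_1 power_one)
    then show ?thesis by (rule inverse_unique[symmetric])
  qed
  then show ?thesis
    by (simp add: trig_monomial_def cnj_prod power_int_inverse power_int_minus)
qed

lemma trig_monomial_zero [simp]: "trig_monomial 0 z = 1"
  by (simp add: trig_monomial_def)

lemma trig_monomial_axis: "trig_monomial (axis u 1) z = z$u"
proof -
  have "trig_monomial (axis u 1) z = (\<Prod>v\<in>UNIV. if v = u then z$u else 1)"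
    unfolding trig_monomial_def by (intro prod.cong refl) (auto simp: axis_def)
  then show ?thesis by simp
qed

lemma trig_polys_add: assumes "Q1 \<in> trig_polys" "Q2 \<in> trig_polys" shows "(\<lambda>z. Q1 z + Q2 z) \<in> trig_polys"
  using assms(2)
proof (induction Q2 rule: trig_polys.induct)
  case zero then show ?case using assms(1) by simp
next
  case (add_monomial Q c h)
  have "(\<lambda>z. Q1 z + Q z + c * trig_monomial h z) \<in> trig_polys" using add_monomial by (intro trig_polys.add_monomial) simp
  then show ?case by (simp add: add.assoc)
qed

lemma trig_polys_scale: "Q \<in> trig_polys \<Longrightarrow> (\<lambda>z. a * Q z) \<in> trig_polys"
proof (induction Q rule: trig_polys.induct)
  case zero then show ?case by (simp add: trig_polys.zero)
next
  case (add_monomial Q c h)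
  have "(\<lambda>z. a * Q z + (a * c) * trig_monomial h z) \<in> trig_polys" using add_monomial by (intro trig_polys.add_monomial)
  then show ?case by (simp add: distrib_left mult.assoc)
qed

lemma trig_polys_monomial: "(\<lambda>z. c * trig_monomial h z) \<in> trig_polys"
  using trig_polys.add_monomial[OF trig_polys.zero, of c h] by simp

lemma trig_polys_const: "(\<lambda>z. c) \<in> trig_polys"
  using trig_polys_monomial[of c 0] by simp

lemma trig_polys_mult_monomial: "Q \<in> trig_polys \<Longrightarrow> \<exists>R\<in>trig_polys. \<forall>z\<in>torus. Q z * trig_monomial h z = R z"
proof (induction Q rule: trig_polys.induct)
  case zero then show ?case by (intro bexI[of _ "\<lambda>z. 0"] trig_polys.zero) simp
next
  case (add_monomial Q c h')
  then obtain R where R: "R \<in> trig_polys" "\<forall>z\<in>torus. Q z * trig_monomial h z = R z" by blast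
  show ?case
    by (rule bexI[of _ "\<lambda>z. R z + c * trig_monomial (h' + h) z"])
       (use R in \<open>auto simp: distrib_right trig_monomial_mult[symmetric] mult.assoc intro: trig_polys.add_monomial\<close>)
qed

lemma trig_polys_mult: assumes "Q1 \<in> trig_polys" "Q2 \<in> trig_polys" shows "\<exists>R\<in>trig_polys. \<forall>z\<in>torus. Q1 z * Q2 z = R z"
  using assms(2)
proof (induction Q2 rule: trig_polys.induct)
  case zero then show ?case by (intro bexI[of _ "\<lambda>z. 0"] trig_polys.zero) simp
next
  case (add_monomial Q c h)
  then obtain R1 where R1: "R1 \<in> trig_polys" "\<forall>z\<in>torus. Q1 z * Q z = R1 z" by blast
  obtain R2 where R2: "R2 \<in> trig_polys" "\<forall>z\<in>torus. Q1 z * trig_monomial h z = R2 z" using trig_polys_mult_monomial[OF assms(1)] by blast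
  show ?case
    by (rule bexI[of _ "\<lambda>z. R1 z + c * R2 z"])
       (use R1 R2 in \<open>auto simp: distrib_left mult.left_commute intro: trig_polys_add trig_polys_scale\<close>)
qed

lemma trig_polys_cnj: "Q \<in> trig_polys \<Longrightarrow> \<exists>R\<in>trig_polys. \<forall>z\<in>torus. cnj (Q z) = R z"
proof (induction Q rule: trig_polys.induct)
  case zero then show ?case by (intro bexI[of _ "\<lambda>z. 0"] trig_polys.zero) simp
next
  case (add_monomial Q c h)
  then obtain R where R: "R \<in> trig_polys" "\<forall>z\<in>torus. cnj (Q z) = R z" by blast
  show ?case
    by (rule bexI[of _ "\<lambda>z. R z + cnj c * trig_monomial (- h) z"])
       (use R in \<open>auto simp: trig_monomial_cnj intro: trig_polys.add_monomial\<close>)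
qed

lemma torus_image: "torus = (\<lambda>\<theta>. \<chi> u. cis (\<theta>$u)) ` (cube :: (real^'d::finite) set)"
proof
  show "(\<lambda>\<theta>. \<chi> u. cis (\<theta>$u)) ` (cube :: (real^'d) set) \<subseteq> torus" by (auto simp: cis_torus)
  show "(torus :: (complex^'d) set) \<subseteq> (\<lambda>\<theta>. \<chi> u. cis (\<theta>$u)) ` cube"
  proof
    fix z :: "complex^'d" assume z: "z \<in> torus"
    have "z = (\<chi> u. cis ((\<chi> u. Arg (z$u)) $ u))"
    proof -
      have "cis (Arg (z$u)) = z$u" for u
        using z torus_nonzero[OF z, of u] by (simp add: cis_Arg torus_def sgn_div_norm)
      then show ?thesis by (simp add: vec_eq_iff)
    qed
    moreover have "(\<chi> u. Arg (z$u)) \<in> (cube :: (real^'d) set)"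
      using Arg_bounded by (auto simp: mem_box_cart less_imp_le)
    ultimately show "z \<in> (\<lambda>\<theta>. \<chi> u. cis (\<theta>$u)) ` cube" by blast
  qed
qed

lemma compact_torus: "compact (torus :: (complex^'d::finite) set)"
  unfolding torus_image by (intro compact_continuous_image continuous_intros compact_cbox)

lemma Re_mult_Re: "Re a * Re b = Re ((a * b + a * cnj b) / 2)"
  by (simp add: algebra_simps)

lemma Re_trig_polys_mult:
  assumes "Q1 \<in> trig_polys" "Q2 \<in> trig_polys"
  shows "\<exists>R\<in>trig_polys. \<forall>z\<in>torus. Re (Q1 z) * Re (Q2 z) = Re (R z)"
proof -
  obtain R1 where R1: "R1 \<in> trig_polys" "\<forall>z\<in>torus. Q1 z * Q2 z = R1 z"
    using trig_polys_mult[OF assms] by blast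
  obtain C where C: "C \<in> trig_polys" "\<forall>z\<in>torus. cnj (Q2 z) = C z"
    using trig_polys_cnj[OF assms(2)] by blast
  obtain R2 where R2: "R2 \<in> trig_polys" "\<forall>z\<in>torus. Q1 z * C z = R2 z"
    using trig_polys_mult[OF assms(1) C(1)] by blast
  have "(\<lambda>z. (1/2) * (R1 z + R2 z)) \<in> trig_polys" by (intro trig_polys_scale trig_polys_add R1(1) R2(1))
  moreover have "\<forall>z\<in>torus. Re (Q1 z) * Re (Q2 z) = Re ((1/2) * (R1 z + R2 z))"
    using R1 R2 C by (auto simp: Re_mult_Re)
  ultimately show ?thesis by (intro bexI)
qed

lemma trig_polys_dense_torus:
  fixes f :: "complex^'d::finite \<Rightarrow> real"
  assumes f_cont: "continuous_on torus f" and e: "e > 0"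
  shows "\<exists>Q\<in>trig_polys. \<forall>z\<in>torus. \<bar>f z - Re (Q z)\<bar> < e"
proof -
  define P where "P = (\<lambda>g. continuous_on torus g \<and> (\<exists>Q\<in>(trig_polys :: (complex^'d \<Rightarrow> complex) set). \<forall>z\<in>torus. g z = Re (Q z)))"
  have "\<exists>g. P g \<and> (\<forall>x\<in>torus. \<bar>f x - g x\<bar> < e)"
  proof (rule Stone_Weierstrass_HOL[OF compact_torus])
    show "P (\<lambda>x. c)" for c
      unfolding P_def by (auto intro!: bexI[OF _ trig_polys_const[of "complex_of_real c"]])
    show "P g \<Longrightarrow> continuous_on torus g" for g by (simp add: P_def)
    show "P (\<lambda>x. g1 x + g2 x)" if "P g1 \<and> P g2" for g1 g2
    proof -
      from that obtain Q1 Q2 where "Q1 \<in> trig_polys" "Q2 \<in> trig_polys" "\<forall>z\<in>torus. g1 z = Re (Q1 z)" "\<forall>z\<in>torus. g2 z = Re (Q2 z)"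
        "continuous_on torus g1" "continuous_on torus g2"
        unfolding P_def by blast
      then show ?thesis unfolding P_def
        by (auto intro!: continuous_intros bexI[OF _ trig_polys_add[of Q1 Q2]])
    qed
    show "P (\<lambda>x. g1 x * g2 x)" if "P g1 \<and> P g2" for g1 g2
    proof -
      from that obtain Q1 Q2 where Q: "Q1 \<in> trig_polys" "Q2 \<in> trig_polys" "\<forall>z\<in>torus. g1 z = Re (Q1 z)" "\<forall>z\<in>torus. g2 z = Re (Q2 z)"
        and c: "continuous_on torus g1" "continuous_on torus g2"
        unfolding P_def by blast
      obtain R where "R \<in> trig_polys" "\<forall>z\<in>torus. Re (Q1 z) * Re (Q2 z) = Re (R z)"
        using Re_trig_polys_mult[OF Q(1,2)] by blast
      with Q c show ?thesis unfolding P_def by (intro conjI continuous_intros) auto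
    qed
    show "\<exists>g. P g \<and> g x \<noteq> g y" if "x \<in> torus \<and> y \<in> torus \<and> x \<noteq> y" for x y
    proof -
      from that obtain u where u: "x$u \<noteq> y$u" by (auto simp: vec_eq_iff)
      show ?thesis
      proof (cases "Re (x$u) = Re (y$u)")
        case True
        then have "Im (x$u) \<noteq> Im (y$u)" using u complex_eqI by blast
        moreover have "P (\<lambda>z. Im (z$u))"
          unfolding P_def
          by (auto intro!: continuous_intros bexI[OF _ trig_polys_monomial[of "- \<i>" "axis u 1"]] simp: trig_monomial_axis)
        ultimately show ?thesis by blast
      next
        case False
        moreover have "P (\<lambda>z. Re (z$u))"
          unfolding P_def
          by (auto intro!: continuous_intros bexI[OF _ trig_polys_monomial[of 1 "axis u 1"]] simp: trig_monomial_axis)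
        ultimately show ?thesis by blast
      qed
    qed
  qed (use f_cont e in auto)
  then obtain g Q where "Q \<in> trig_polys" "\<forall>z\<in>torus. g z = Re (Q z)" "\<forall>x\<in>torus. \<bar>f x - g x\<bar> < e"
    unfolding P_def by blast
  then show ?thesis by auto
qed

lemma fejer_kernel_trig_poly_limit:
  fixes v :: "nat \<Rightarrow> nat^'d::finite" and \<mu> :: "nat \<Rightarrow> real^'d"
  assumes vlim: "\<And>u. filterlim (\<lambda>n. v n $ u) at_top sequentially" and vpos: "\<And>n u. v n $ u \<ge> 1"
    and mlim: "\<mu> \<longlonglongrightarrow> lam"
    and Q: "Q \<in> trig_polys"
  shows "continuous_on UNIV (\<lambda>\<theta>::real^'d. Q (\<chi> u. cis (\<theta>$u)))
    \<and> (\<lambda>n. integral cube (\<lambda>\<theta>. complex_of_real (fejer_kernel (block (v n) 0) (\<mu> n) \<theta>) * Q (\<chi> u. cis (\<theta>$u)))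
           / complex_of_real ((2 * pi) ^ CARD('d) * real (\<Prod>u\<in>UNIV. v n $ u))) \<longlonglongrightarrow> Q (\<chi> u. cis (lam$u))"
  using Q
proof (induction Q rule: trig_polys.induct)
  case zero then show ?case by simp
next
  case (add_monomial Q c h)
  let ?D = "\<lambda>n. complex_of_real ((2 * pi) ^ CARD('d) * real (\<Prod>u\<in>UNIV. v n $ u))"
  let ?K = "\<lambda>n \<theta>. complex_of_real (fejer_kernel (block (v n) 0) (\<mu> n) \<theta>)"
  have cQ: "continuous_on UNIV (\<lambda>\<theta>::real^'d. Q (\<chi> u. cis (\<theta>$u)))" using add_monomial by blast
  have lQ: "(\<lambda>n. integral cube (\<lambda>\<theta>. ?K n \<theta> * Q (\<chi> u. cis (\<theta>$u))) / ?D n) \<longlonglongrightarrow> Q (\<chi> u. cis (lam$u))"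
    using add_monomial by blast
  have c2: "continuous_on UNIV (\<lambda>\<theta>::real^'d. Q (\<chi> u. cis (\<theta>$u)) + c * trig_monomial h (\<chi> u. cis (\<theta>$u)))"
    unfolding trig_monomial_cis by (intro continuous_intros cQ)
  have i1: "(\<lambda>\<theta>. ?K n \<theta> * Q (\<chi> u. cis (\<theta>$u))) integrable_on cube" for n
    by (intro integrable_continuous continuous_intros continuous_on_subset[OF cQ]) auto
  have i2: "(\<lambda>\<theta>. c * (?K n \<theta> * fourier_mode h \<theta>)) integrable_on cube" for n
    by (intro integrable_continuous continuous_intros)
  have eq: "integral cube (\<lambda>\<theta>. ?K n \<theta> * (Q (\<chi> u. cis (\<theta>$u)) + c * trig_monomial h (\<chi> u. cis (\<theta>$u)))) / ?D n
     = integral cube (\<lambda>\<theta>. ?K n \<theta> * Q (\<chi> u. cis (\<theta>$u))) / ?D n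
       + c * (integral cube (\<lambda>\<theta>. ?K n \<theta> * fourier_mode h \<theta>) / ?D n)" for n
  proof -
    have "integral cube (\<lambda>\<theta>. ?K n \<theta> * (Q (\<chi> u. cis (\<theta>$u)) + c * trig_monomial h (\<chi> u. cis (\<theta>$u))))
        = integral cube (\<lambda>\<theta>. ?K n \<theta> * Q (\<chi> u. cis (\<theta>$u)) + c * (?K n \<theta> * fourier_mode h \<theta>))"
      by (simp add: trig_monomial_cis algebra_simps)
    also have "\<dots> = integral cube (\<lambda>\<theta>. ?K n \<theta> * Q (\<chi> u. cis (\<theta>$u))) + c * integral cube (\<lambda>\<theta>. ?K n \<theta> * fourier_mode h \<theta>)"
      using integral_add[OF i1 i2] by simp
    finally show ?thesis by (simp add: add_divide_distrib)
  qed
  have "(\<lambda>n. integral cube (\<lambda>\<theta>. ?K n \<theta> * Q (\<chi> u. cis (\<theta>$u))) / ?D n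
       + c * (integral cube (\<lambda>\<theta>. ?K n \<theta> * fourier_mode h \<theta>) / ?D n)) \<longlonglongrightarrow> Q (\<chi> u. cis (lam$u)) + c * fourier_mode h lam"
    by (intro tendsto_intros lQ fejer_kernel_fourier_mode_limit[OF vlim vpos mlim])
  then show ?case
    unfolding eq using c2 by (simp add: trig_monomial_cis)
qed

lemma kernel_average_tendsto_of_approx:
  fixes K :: "nat \<Rightarrow> real^'d::finite \<Rightarrow> real" and F :: "real^'d \<Rightarrow> real"
  assumes K_nonneg: "\<And>n \<theta>. 0 \<le> K n \<theta>" and K_integral: "\<And>n. integral cube (K n) = D n"
    and D_pos: "\<And>n. 0 < D n"
    and K_cont: "\<And>n. continuous_on UNIV (K n)" and F_cont: "continuous_on UNIV F"
    and approx: "\<And>\<epsilon>. \<epsilon> > 0 \<Longrightarrow> \<exists>G. continuous_on UNIV G \<and> (\<forall>\<theta>. \<bar>F \<theta> - G \<theta>\<bar> < \<epsilon>)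
        \<and> (\<lambda>n. integral cube (\<lambda>\<theta>. K n \<theta> * G \<theta>) / D n) \<longlonglongrightarrow> G lam"
  shows "(\<lambda>n. integral cube (\<lambda>\<theta>. K n \<theta> * F \<theta>) / D n) \<longlonglongrightarrow> F lam"
proof (rule tendstoI)
  fix \<epsilon> :: real assume "\<epsilon> > 0"
  then obtain G where G_cont: "continuous_on UNIV G" and close: "\<And>\<theta>. \<bar>F \<theta> - G \<theta>\<bar> < \<epsilon> / 3"
    and G_lim: "(\<lambda>n. integral cube (\<lambda>\<theta>. K n \<theta> * G \<theta>) / D n) \<longlonglongrightarrow> G lam"
    using approx[of "\<epsilon> / 3"] by auto
  have averages_close: "\<bar>integral cube (\<lambda>\<theta>. K n \<theta> * F \<theta>) / D n - integral cube (\<lambda>\<theta>. K n \<theta> * G \<theta>) / D n\<bar> \<le> \<epsilon> / 3" for n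
  proof -
    have int: "(\<lambda>\<theta>. K n \<theta> * H \<theta>) integrable_on cube" if "continuous_on UNIV H" for H
      by (intro integrable_continuous continuous_intros continuous_on_subset[OF K_cont]
          continuous_on_subset[OF that]) auto
    have "\<bar>integral cube (\<lambda>\<theta>. K n \<theta> * (F \<theta> - G \<theta>))\<bar> \<le> integral cube (\<lambda>\<theta>. K n \<theta> * (\<epsilon> / 3))"
      using integral_norm_bound_integral[OF int int, of "\<lambda>\<theta>. F \<theta> - G \<theta>" "\<lambda>_. \<epsilon> / 3"]
        mult_left_mono[OF less_imp_le[OF close] K_nonneg]
      by (simp add: F_cont G_cont continuous_on_diff abs_mult K_nonneg)
    also have "\<dots> = \<epsilon> / 3 * D n"
      by (simp add: K_integral mult.commute)
    finally show ?thesis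
      using D_pos[of n] int[OF F_cont] int[OF G_cont]
      by (simp add: right_diff_distrib integral_diff diff_divide_distrib[symmetric] abs_div pos_divide_le_eq)
  qed
  have limits_close: "\<bar>G lam - F lam\<bar> < \<epsilon> / 3" using close[of lam] by (simp add: abs_minus_commute)
  have "\<forall>\<^sub>F n in sequentially. dist (integral cube (\<lambda>\<theta>. K n \<theta> * G \<theta>) / D n) (G lam) < \<epsilon> / 3"
    using tendstoD[OF G_lim, of "\<epsilon> / 3"] \<open>\<epsilon> > 0\<close> by simp
  then show "\<forall>\<^sub>F n in sequentially. dist (integral cube (\<lambda>\<theta>. K n \<theta> * F \<theta>) / D n) (F lam) < \<epsilon>"
  proof (rule eventually_mono)
    fix n assume "dist (integral cube (\<lambda>\<theta>. K n \<theta> * G \<theta>) / D n) (G lam) < \<epsilon> / 3"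
    with averages_close[of n] limits_close
    show "dist (integral cube (\<lambda>\<theta>. K n \<theta> * F \<theta>) / D n) (F lam) < \<epsilon>"
      unfolding dist_real_def abs_less_iff abs_le_iff by linarith
  qed
qed

lemma fejer_kernel_limit:
  fixes v :: "nat \<Rightarrow> nat^'d::finite" and \<mu> :: "nat \<Rightarrow> real^'d" and f :: "complex^'d \<Rightarrow> real"
  assumes vlim: "\<And>u. filterlim (\<lambda>n. v n $ u) at_top sequentially" and vpos: "\<And>n u. v n $ u \<ge> 1"
    and mlim: "\<mu> \<longlonglongrightarrow> lam" and f_cont: "continuous_on torus f"
  shows "(\<lambda>n. integral cube (\<lambda>\<theta>. fejer_kernel (block (v n) 0) (\<mu> n) \<theta> * f (\<chi> u. cis (\<theta>$u)))
           / ((2 * pi) ^ CARD('d) * real (\<Prod>u\<in>UNIV. v n $ u))) \<longlonglongrightarrow> f (\<chi> u. cis (lam$u))"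
proof (rule kernel_average_tendsto_of_approx[where F = "\<lambda>\<theta>. f (\<chi> u. cis (\<theta>$u))"])
  show "0 < (2 * pi) ^ CARD('d) * real (\<Prod>u\<in>UNIV. v n $ u)" for n
    using vpos[of n] by (simp add: Suc_le_eq prod_pos)
  show "continuous_on UNIV (\<lambda>\<theta>::real^'d. f (\<chi> u. cis (\<theta>$u)))"
    by (rule continuous_on_compose2[OF f_cont]) (auto intro!: continuous_intros simp: cis_torus)
  fix \<epsilon> :: real assume "\<epsilon> > 0"
  then obtain Q where Q: "Q \<in> trig_polys" "\<forall>z\<in>torus. \<bar>f z - Re (Q z)\<bar> < \<epsilon>"
    using trig_polys_dense_torus[OF f_cont] by blast
  have Q_cont: "continuous_on UNIV (\<lambda>\<theta>::real^'d. Q (\<chi> u. cis (\<theta>$u)))"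
    and Q_lim: "(\<lambda>n. integral cube (\<lambda>\<theta>. complex_of_real (fejer_kernel (block (v n) 0) (\<mu> n) \<theta>) * Q (\<chi> u. cis (\<theta>$u)))
           / complex_of_real ((2 * pi) ^ CARD('d) * real (\<Prod>u\<in>UNIV. v n $ u))) \<longlonglongrightarrow> Q (\<chi> u. cis (lam$u))"
    using fejer_kernel_trig_poly_limit[OF vlim vpos mlim Q(1)] by auto
  have Re_integral: "Re (integral cube (\<lambda>\<theta>. complex_of_real (fejer_kernel (block (v n) 0) (\<mu> n) \<theta>) * Q (\<chi> u. cis (\<theta>$u))))
      = integral cube (\<lambda>\<theta>. fejer_kernel (block (v n) 0) (\<mu> n) \<theta> * Re (Q (\<chi> u. cis (\<theta>$u))))" for n
    by (subst integral_Re_on[symmetric])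
       (auto intro!: integrable_continuous continuous_intros continuous_on_subset[OF Q_cont])
  have "(\<lambda>n. integral cube (\<lambda>\<theta>. fejer_kernel (block (v n) 0) (\<mu> n) \<theta> * Re (Q (\<chi> u. cis (\<theta>$u))))
           / ((2 * pi) ^ CARD('d) * real (\<Prod>u\<in>UNIV. v n $ u))) \<longlonglongrightarrow> Re (Q (\<chi> u. cis (lam$u)))"
    using tendsto_Re[OF Q_lim] unfolding Re_divide_of_real Re_integral .
  with Q(2) cis_torus Q_cont
  show "\<exists>G. continuous_on UNIV G \<and> (\<forall>\<theta>. \<bar>f (\<chi> u. cis (\<theta>$u)) - G \<theta>\<bar> < \<epsilon>)
      \<and> (\<lambda>n. integral cube (\<lambda>\<theta>. fejer_kernel (block (v n) 0) (\<mu> n) \<theta> * G \<theta>)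
           / ((2 * pi) ^ CARD('d) * real (\<Prod>u\<in>UNIV. v n $ u))) \<longlonglongrightarrow> G lam"
    by (intro exI[of _ "\<lambda>\<theta>. Re (Q (\<chi> u. cis (\<theta>$u)))"]) (auto intro!: continuous_intros)
qed (auto simp: fejer_kernel_nonneg integral_fejer_kernel intro!: continuous_intros)

lemma uniform_limit_sum:
  fixes f :: "'i \<Rightarrow> 'n \<Rightarrow> 'x \<Rightarrow> 'b::real_normed_vector"
  assumes "\<And>i. i \<in> I \<Longrightarrow> uniform_limit S (f i) (l i) F"
  shows "uniform_limit S (\<lambda>n x. \<Sum>i\<in>I. f i n x) (\<lambda>x. \<Sum>i\<in>I. l i x) F"
  using assms by (induction I rule: infinite_finite_induct) (auto intro!: uniform_limit_intros)

lemma uniform_limit_tendsto_const: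
  assumes "(g \<longlongrightarrow> L) F"
  shows "uniform_limit S (\<lambda>n x. g n) (\<lambda>x. L) F"
  using tendstoD[OF assms] by (auto intro!: uniform_limitI elim: eventually_mono)

lemma uniform_limit_null_bound:
  assumes "\<forall>\<^sub>F n in F. \<forall>x\<in>S. norm (f n x) \<le> b n" and "(b \<longlongrightarrow> 0) F"
  shows "uniform_limit S f (\<lambda>x. 0) F"
  using uniform_limit_null_comparison[OF assms(1) uniform_limit_tendsto_const[OF assms(2)]] .

lemma uniform_limit_SUP_abs_diff:
  fixes g :: "'n \<Rightarrow> 'x \<Rightarrow> real"
  assumes "uniform_limit UNIV g (\<lambda>x. c) F"
  shows "((\<lambda>n. SUP x. \<bar>c - g n x\<bar>) \<longlongrightarrow> 0) F"
proof (rule tendstoI)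
  fix e :: real assume "e > 0"
  then have "\<forall>\<^sub>F n in F. \<forall>x. \<bar>c - g n x\<bar> < e / 2"
    using uniform_limitD[OF assms, of "e / 2"] by (simp add: dist_real_def abs_minus_commute)
  then show "\<forall>\<^sub>F n in F. dist (SUP x. \<bar>c - g n x\<bar>) 0 < e"
  proof eventually_elim
    case (elim n)
    then have "bdd_above (range (\<lambda>x. \<bar>c - g n x\<bar>))" by (auto intro!: bdd_aboveI2[where M = "e / 2"] less_imp_le)
    then have "\<bar>c - g n x\<bar> \<le> (SUP x. \<bar>c - g n x\<bar>)" for x by (rule cSUP_upper[OF UNIV_I])
    then have "0 \<le> (SUP x. \<bar>c - g n x\<bar>)" by (rule order.trans[OF abs_ge_zero])
    moreover have "(SUP x. \<bar>c - g n x\<bar>) \<le> e / 2" using elim by (intro cSUP_least) (auto intro: less_imp_le)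
    ultimately show ?case using \<open>e > 0\<close> by simp
  qed
qed

lemma abs_sin_ge_half: fixes x :: real assumes "\<bar>x\<bar> \<le> 1" shows "\<bar>sin x\<bar> \<ge> \<bar>x\<bar> / 2"
proof -
  have "\<bar>sin x - (\<Sum>m<3. sin_coeff m * x ^ m)\<bar> \<le> inverse (fact 3) * \<bar>x\<bar> ^ 3"
    by (rule Maclaurin_sin_bound)
  moreover have "(\<Sum>m<3. sin_coeff m * x ^ m) = x"
    by (simp add: numeral_3_eq_3 sin_coeff_def)
  moreover have "\<bar>x\<bar> ^ 3 \<le> \<bar>x\<bar>"
  proof -
    have "\<bar>x\<bar> ^ 3 = \<bar>x\<bar> * \<bar>x\<bar>\<^sup>2" by (simp add: power3_eq_cube power2_eq_square)
    also have "\<dots> \<le> \<bar>x\<bar> * 1" using assms by (intro mult_left_mono) (auto simp: abs_square_le_1)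
    finally show ?thesis by simp
  qed
  moreover have "(fact 3 :: real) = 6" by (simp add: fact_numeral)
  ultimately have "\<bar>sin x - x\<bar> \<le> \<bar>x\<bar> / 6" by (simp add: divide_simps)
  then show ?thesis by linarith
qed

lemma norm_exp_i_minus_1_ge:
  fixes x :: real assumes "\<bar>x\<bar> \<le> 1" shows "cmod (exp (\<i> * complex_of_real x) - 1) \<ge> \<bar>x\<bar> / 2"
proof -
  have "\<bar>sin x\<bar> = \<bar>Im (exp (\<i> * complex_of_real x) - 1)\<bar>" by (simp add: Im_exp)
  also have "\<dots> \<le> cmod (exp (\<i> * complex_of_real x) - 1)" by (rule abs_Im_le_cmod)
  finally show ?thesis using abs_sin_ge_half[OF assms] by linarith
qed

lemma le_divide_of_mult_le:
  fixes A B c r :: real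
  assumes "c * A \<le> B" "r \<le> c" "0 < r" "0 \<le> A"
  shows "A \<le> B / r"
proof -
  have "r * A \<le> B" using mult_right_mono[OF assms(2,4)] assms(1) by linarith
  then show ?thesis using assms(3) by (simp add: pos_le_divide_eq mult.commute)
qed

lemma inverse_sqrt_mult_powr:
  fixes x \<delta> :: real
  assumes "x \<ge> 1"
  shows "1 / (sqrt x * x powr (- (1/2 - \<delta>))) = x powr (- \<delta>)"
proof -
  have "sqrt x * x powr (- (1/2 - \<delta>)) = x powr (1/2) * x powr (- (1/2 - \<delta>))"
    using assms by (simp add: powr_half_sqrt)
  also have "\<dots> = x powr (1/2 + - (1/2 - \<delta>))" by (rule powr_add[symmetric])
  also have "\<dots> = x powr \<delta>" by simp
  finally show ?thesis by (simp only: powr_minus_divide)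
qed

lemma exp_minus_i_square_ne_1:
  fixes l :: real
  assumes "-pi < l" "l \<le> pi" "l \<noteq> 0" "l \<noteq> pi"
  shows "exp (- \<i> * complex_of_real l) * exp (- \<i> * complex_of_real l) \<noteq> 1"
proof
  assume a: "exp (- \<i> * complex_of_real l) * exp (- \<i> * complex_of_real l) = 1"
  have "exp (- \<i> * complex_of_real l) * exp (- \<i> * complex_of_real l) = exp (\<i> * complex_of_real (- 2 * l))"
    by (simp flip: exp_add) (simp add: algebra_simps)
  then have "cos (- 2 * l) = 1" using a by (metis Re_exp exp_zero one_complex.sel(1) Re_complex_of_real Im_i_times Re_i_times mult_1 exp_of_real cos_of_real cis_conv_exp cis.sel(1))
  then have "\<exists>n::int. - 2 * l = n * 2 * pi" by (simp only: cos_one_2pi_int)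
  then obtain n :: int where n: "- 2 * l = real_of_int n * 2 * pi" by blast
  then have l: "l = - (real_of_int n) * pi" by (simp add: algebra_simps)
  have "real_of_int n * pi < 1 * pi" using assms(1) l by simp
  then have "real_of_int n < 1" by (rule mult_less_cancel_right_pos[THEN iffD1, OF pi_gt_zero])
  moreover have "-1 * pi \<le> real_of_int n * pi" using assms(2) l by simp
  then have "-1 \<le> real_of_int n" by (rule mult_le_cancel_right_pos[THEN iffD1, OF pi_gt_zero])
  ultimately have "n = 0 \<or> n = -1" by linarith
  then show False using l assms(3,4) by auto
qed

section \<open>Random fields with a continuous spectral density\<close>

locale spectral_field =
  fixes M :: "'a measure" and X :: "int^'d::finite \<Rightarrow> 'a \<Rightarrow> complex" and f :: "complex^'d \<Rightarrow> real"
  assumes meas: "\<And>k. X k \<in> borel_measurable M"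
    and L2X: "\<And>k. L2 M (X k)"
    and spec: "is_spectral_density M X f"
    and f_cont: "continuous_on torus f"
begin

definition dens :: "real^'d \<Rightarrow> real" where
  "dens \<theta> = f (\<chi> u. cis (\<theta>$u))"

lemma continuous_on_dens: "continuous_on S dens"
  unfolding dens_def
  by (rule continuous_on_compose2[OF f_cont]) (auto intro!: continuous_intros simp: cis_torus)

lemma covariance_spectral: "(\<integral>\<omega>. X k \<omega> * cnj (X j \<omega>) \<partial>M)
   = integral cube (\<lambda>\<theta>. fourier_mode (k - j) \<theta> * of_real (dens \<theta>)) / (2 * pi) ^ CARD('d)"
  using spec unfolding is_spectral_density_def dens_def fourier_mode_def by simp

lemma covariance_shift: "(\<integral>\<omega>. X (k + e) \<omega> * cnj (X (j + e) \<omega>) \<partial>M) = (\<integral>\<omega>. X k \<omega> * cnj (X j \<omega>) \<partial>M)"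
  by (simp add: covariance_spectral)

lemma cross_moment_spectral:
  assumes A: "finite A" and B: "finite B"
  shows "(\<integral>\<omega>. (\<Sum>k\<in>A. c k * X k \<omega>) * cnj (\<Sum>j\<in>B. d j * X j \<omega>) \<partial>M)
     = integral cube (\<lambda>\<theta>. (\<Sum>k\<in>A. c k * fourier_mode k \<theta>) * cnj (\<Sum>j\<in>B. d j * fourier_mode j \<theta>) * of_real (dens \<theta>)) / (2 * pi) ^ CARD('d)"
proof -
  have int: "(\<lambda>\<theta>. c k * cnj (d j) * (fourier_mode (k - j) \<theta> * of_real (dens \<theta>))) integrable_on cube" for k j
    by (intro integrable_continuous continuous_intros continuous_on_dens)
  have "(\<integral>\<omega>. (\<Sum>k\<in>A. c k * X k \<omega>) * cnj (\<Sum>j\<in>B. d j * X j \<omega>) \<partial>M)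
      = (\<Sum>k\<in>A. \<Sum>j\<in>B. c k * cnj (d j) * (\<integral>\<omega>. X k \<omega> * cnj (X j \<omega>) \<partial>M))"
    unfolding cnj_sum complex_cnj_mult by (rule integral_sum_mult_sum[OF A B]) (auto intro!: L2_cnj L2X)
  also have "\<dots> = (\<Sum>k\<in>A. \<Sum>j\<in>B. integral cube (\<lambda>\<theta>. c k * cnj (d j) * (fourier_mode (k - j) \<theta> * of_real (dens \<theta>)))) / (2 * pi) ^ CARD('d)"
    by (simp add: covariance_spectral sum_divide_distrib)
  also have "(\<Sum>k\<in>A. \<Sum>j\<in>B. integral cube (\<lambda>\<theta>. c k * cnj (d j) * (fourier_mode (k - j) \<theta> * of_real (dens \<theta>))))
      = integral cube (\<lambda>\<theta>. (\<Sum>k\<in>A. \<Sum>j\<in>B. c k * cnj (d j) * (fourier_mode (k - j) \<theta> * of_real (dens \<theta>))))"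
    using A B int by (simp add: integral_sum integrable_sum)
  also have "(\<lambda>\<theta>. (\<Sum>k\<in>A. \<Sum>j\<in>B. c k * cnj (d j) * (fourier_mode (k - j) \<theta> * of_real (dens \<theta>))))
      = (\<lambda>\<theta>. (\<Sum>k\<in>A. c k * fourier_mode k \<theta>) * cnj (\<Sum>j\<in>B. d j * fourier_mode j \<theta>) * of_real (dens \<theta>))"
    by (rule ext, simp add: cnj_sum sum_distrib_left sum_distrib_right fourier_mode_mult_cnj[symmetric] ac_simps)
      (rule sum.swap)
  finally show ?thesis .
qed

lemma second_moment_spectral:
  assumes A: "finite A"
  shows "(\<integral>\<omega>. (cmod (\<Sum>k\<in>A. c k * X k \<omega>))\<^sup>2 \<partial>M)
     = integral cube (\<lambda>\<theta>. (cmod (\<Sum>k\<in>A. c k * fourier_mode k \<theta>))\<^sup>2 * dens \<theta>) / (2 * pi) ^ CARD('d)"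
proof -
  have "complex_of_real (\<integral>\<omega>. (cmod (\<Sum>k\<in>A. c k * X k \<omega>))\<^sup>2 \<partial>M)
      = (\<integral>\<omega>. (\<Sum>k\<in>A. c k * X k \<omega>) * cnj (\<Sum>k\<in>A. c k * X k \<omega>) \<partial>M)"
    by (simp only: integral_complex_of_real[symmetric] complex_norm_square)
  also have "\<dots> = integral cube (\<lambda>\<theta>. (\<Sum>k\<in>A. c k * fourier_mode k \<theta>) * cnj (\<Sum>k\<in>A. c k * fourier_mode k \<theta>) * of_real (dens \<theta>)) / (2 * pi) ^ CARD('d)"
    by (rule cross_moment_spectral[OF A A])
  also have "(\<lambda>\<theta>. (\<Sum>k\<in>A. c k * fourier_mode k \<theta>) * cnj (\<Sum>k\<in>A. c k * fourier_mode k \<theta>) * of_real (dens \<theta>))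
      = (\<lambda>\<theta>. complex_of_real ((cmod (\<Sum>k\<in>A. c k * fourier_mode k \<theta>))\<^sup>2 * dens \<theta>))"
    by (simp only: of_real_mult complex_norm_square)
  also have "integral cube (\<lambda>\<theta>. complex_of_real ((cmod (\<Sum>k\<in>A. c k * fourier_mode k \<theta>))\<^sup>2 * dens \<theta>))
      = of_real (integral cube (\<lambda>\<theta>. (cmod (\<Sum>k\<in>A. c k * fourier_mode k \<theta>))\<^sup>2 * dens \<theta>))"
    by (intro integral_of_real_on integrable_continuous continuous_intros continuous_on_dens)
  finally show ?thesis
    by (metis (no_types, lifting) of_real_eq_iff of_real_divide of_real_numeral of_real_power of_real_mult)
qed

lemma second_moment_le:
  assumes A: "finite A" and Mf: "\<And>z. z \<in> torus \<Longrightarrow> f z \<le> Mf"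
  shows "(\<integral>\<omega>. (cmod (\<Sum>k\<in>A. c k * X k \<omega>))\<^sup>2 \<partial>M) \<le> Mf * (\<Sum>k\<in>A. (cmod (c k))\<^sup>2)"
proof -
  have "integral cube (\<lambda>\<theta>. (cmod (\<Sum>k\<in>A. c k * fourier_mode k \<theta>))\<^sup>2 * dens \<theta>)
      \<le> integral cube (\<lambda>\<theta>. Mf * (cmod (\<Sum>k\<in>A. c k * fourier_mode k \<theta>))\<^sup>2)"
  proof (rule integral_le)
    show "(\<lambda>\<theta>. (cmod (\<Sum>k\<in>A. c k * fourier_mode k \<theta>))\<^sup>2 * dens \<theta>) integrable_on cube"
      by (intro integrable_continuous continuous_intros continuous_on_dens)
    show "(\<lambda>\<theta>. Mf * (cmod (\<Sum>k\<in>A. c k * fourier_mode k \<theta>))\<^sup>2) integrable_on cube"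
      by (intro integrable_continuous continuous_intros)
    show "(cmod (\<Sum>k\<in>A. c k * fourier_mode k \<theta>))\<^sup>2 * dens \<theta> \<le> Mf * (cmod (\<Sum>k\<in>A. c k * fourier_mode k \<theta>))\<^sup>2" for \<theta>
      using mult_right_mono[OF Mf[OF cis_torus[of \<theta>]] zero_le_power2[of "cmod (\<Sum>k\<in>A. c k * fourier_mode k \<theta>)"]]
      by (simp add: dens_def mult.commute)
  qed
  also have "\<dots> = Mf * ((2 * pi) ^ CARD('d) * (\<Sum>k\<in>A. (cmod (c k))\<^sup>2))"
    by (simp add: integral_cube_norm_trig_sum[OF A])
  finally show ?thesis
    by (simp add: second_moment_spectral[OF A] divide_le_eq mult_ac)
qed

lemma density_bounded:
  obtains Mf where "\<And>z. z \<in> torus \<Longrightarrow> f z \<le> Mf" and "Mf \<ge> 0"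
proof -
  have "bounded (f ` torus)" by (intro compact_imp_bounded compact_continuous_image f_cont compact_torus)
  then obtain B where "\<forall>x\<in>f ` torus. \<bar>x\<bar> \<le> B" using bounded_real by blast
  then show ?thesis by (intro that[of "max B 0"]) auto
qed

lemma second_moment_twisted_sum_le:
  assumes S: "finite S" and Mf: "\<And>z. z \<in> torus \<Longrightarrow> f z \<le> Mf"
  shows "(\<integral>\<omega>. (cmod (twisted_sum X \<mu> S \<omega>))\<^sup>2 \<partial>M) \<le> Mf * real (card S)"
  using second_moment_le[OF S Mf, of "twist \<mu>"] unfolding twisted_sum_twist by simp

lemma second_moment_block_shift_diff_le:
  fixes v :: "nat^'d"
  assumes Mf: "\<And>z. z \<in> torus \<Longrightarrow> f z \<le> Mf" and vs: "v$s \<ge> 1"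
  shows "(\<integral>\<omega>. (cmod (twisted_sum X \<mu> (block v (w + axis s 1)) \<omega> - twisted_sum X \<mu> (block v w) \<omega>))\<^sup>2 \<partial>M)
     \<le> 4 * Mf * real (\<Prod>u\<in>UNIV. v$u) / real (v$s)"
proof -
  let ?B' = "block v (w + axis s 1)" and ?B = "block v w"
  define U1 where "U1 = twisted_sum X \<mu> (?B' - ?B)"
  define U2 where "U2 = twisted_sum X \<mu> (?B - ?B')"
  have eq: "twisted_sum X \<mu> ?B' \<omega> - twisted_sum X \<mu> ?B \<omega> = U1 \<omega> - U2 \<omega>" for \<omega>
    unfolding U1_def U2_def twisted_sum_def by (rule sum_diff_sum) simp_all
  have L1: "L2 M U1" and L2': "L2 M U2" unfolding U1_def U2_def by (intro L2_twisted L2X)+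
  have i1: "integrable M (\<lambda>\<omega>. (cmod (U1 \<omega>))\<^sup>2)" and i2: "integrable M (\<lambda>\<omega>. (cmod (U2 \<omega>))\<^sup>2)"
    using L1 L2' by (auto simp: L2_def)
  have "(\<integral>\<omega>. (cmod (twisted_sum X \<mu> ?B' \<omega> - twisted_sum X \<mu> ?B \<omega>))\<^sup>2 \<partial>M)
      = (\<integral>\<omega>. (cmod (U1 \<omega> - U2 \<omega>))\<^sup>2 \<partial>M)" by (simp add: eq)
  also have "\<dots> \<le> (\<integral>\<omega>. 2 * (cmod (U1 \<omega>))\<^sup>2 + 2 * (cmod (U2 \<omega>))\<^sup>2 \<partial>M)"
  proof (rule Bochner_Integration.integral_mono)
    show "integrable M (\<lambda>\<omega>. (cmod (U1 \<omega> - U2 \<omega>))\<^sup>2)"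
      using L2_diff[OF L1 L2'] by (simp add: L2_def)
    show "integrable M (\<lambda>\<omega>. 2 * (cmod (U1 \<omega>))\<^sup>2 + 2 * (cmod (U2 \<omega>))\<^sup>2)" using i1 i2 by simp
    show "(cmod (U1 \<omega> - U2 \<omega>))\<^sup>2 \<le> 2 * (cmod (U1 \<omega>))\<^sup>2 + 2 * (cmod (U2 \<omega>))\<^sup>2" for \<omega>
      using norm_add_square_le[of "U1 \<omega>" "- U2 \<omega>"] by simp
  qed
  also have "\<dots> = 2 * (\<integral>\<omega>. (cmod (U1 \<omega>))\<^sup>2 \<partial>M) + 2 * (\<integral>\<omega>. (cmod (U2 \<omega>))\<^sup>2 \<partial>M)"
    using i1 i2 by simp
  also have "\<dots> \<le> 2 * (Mf * real (card (?B' - ?B))) + 2 * (Mf * real (card (?B - ?B')))"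
    unfolding U1_def U2_def by (intro add_mono mult_left_mono second_moment_twisted_sum_le Mf) auto
  also have "\<dots> = 4 * Mf * real (\<Prod>u\<in>UNIV. v$u) / real (v$s)"
    unfolding block_shift_diff[OF vs] block_diff_shift[OF vs] real_card_int_box_slab[OF vs] by simp
  finally show ?thesis .
qed

lemma moment_block_shift_bound:
  fixes v :: "nat^'d"
  assumes phm: "\<And>a b. \<phi> (a * b) = \<phi> a * \<phi> b" and pha: "\<And>a b. \<phi> (a + b) = \<phi> a + \<phi> b" and ph0: "\<phi> 0 = 0"
    and phL2: "\<And>U. L2 M U \<Longrightarrow> L2 M (\<lambda>\<omega>. \<phi> (U \<omega>))" and phn: "\<And>z. cmod (\<phi> z) = cmod z"
    and inv: "\<And>k j. (\<integral>\<omega>. X (k + axis s 1) \<omega> * \<phi> (X (j + axis s 1) \<omega>) \<partial>M) = (\<integral>\<omega>. X k \<omega> * \<phi> (X j \<omega>) \<partial>M)"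
    and Mf: "\<And>z. z \<in> torus \<Longrightarrow> f z \<le> Mf" and Mf0: "Mf \<ge> 0" and vs: "v$s \<ge> 1"
  shows "cmod (twist \<mu> (axis s 1) * \<phi> (twist \<mu>' (axis s 1)) - 1)
       * cmod (\<integral>\<omega>. twisted_sum X \<mu> (block v w) \<omega> * \<phi> (twisted_sum X \<mu>' (block v w) \<omega>) \<partial>M)
     \<le> 5 * Mf * real (\<Prod>u\<in>UNIV. v$u) / sqrt (real (v$s))"
proof -
  define e where "e = (axis s 1 :: int^'d)"
  define V where "V = real (\<Prod>u\<in>UNIV. v$u)"
  define r where "r = sqrt (real (v$s))"
  have r0: "r > 0" using vs by (simp add: r_def)
  have r2: "r\<^sup>2 = real (v$s)" by (simp add: r_def)
  define S1 where "S1 = twisted_sum X \<mu> (block v w)"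
  define S1' where "S1' = twisted_sum X \<mu> (block v (w + e))"
  define S2 where "S2 = twisted_sum X \<mu>' (block v w)"
  define S2' where "S2' = twisted_sum X \<mu>' (block v (w + e))"
  have L: "L2 M S1" "L2 M S1'" "L2 M S2" "L2 M S2'"
    unfolding S1_def S1'_def S2_def S2'_def by (intro L2_twisted L2X)+
  have \<phi>_diff: "\<phi> (a - b) = \<phi> a - \<phi> b" for a b
    using pha[of "a - b" b] by (simp add: algebra_simps)
  define \<alpha> where "\<alpha> = twist \<mu> e * \<phi> (twist \<mu>' e)"
  define P where "P = (\<integral>\<omega>. S1 \<omega> * \<phi> (S2 \<omega>) \<partial>M)"
  have "(\<integral>\<omega>. S1' \<omega> * \<phi> (S2' \<omega>) \<partial>M) = \<alpha> * P"
    unfolding S1'_def S2'_def \<alpha>_def P_def S1_def S2_def e_def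
    by (rule moment_block_shift[where X = X and \<phi> = \<phi> and e = "axis s 1" and M = M, OF L2X phm pha ph0 phL2 inv])
  then have "(\<alpha> - 1) * P = (\<integral>\<omega>. S1' \<omega> * \<phi> (S2' \<omega>) \<partial>M) - (\<integral>\<omega>. S1 \<omega> * \<phi> (S2 \<omega>) \<partial>M)"
    by (simp add: P_def algebra_simps)
  also have "\<dots> = (\<integral>\<omega>. (S1' \<omega> - S1 \<omega>) * \<phi> (S2' \<omega>) \<partial>M) + (\<integral>\<omega>. \<phi> (S2' \<omega> - S2 \<omega>) * S1 \<omega> \<partial>M)"
    unfolding \<phi>_diff by (rule integral_mult_diff) (intro L phL2)+
  finally have split: "(\<alpha> - 1) * P = \<dots>" .
  have d1: "(\<integral>\<omega>. (cmod (S1' \<omega> - S1 \<omega>))\<^sup>2 \<partial>M) \<le> 4 * Mf * V / r\<^sup>2"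
    and d2: "(\<integral>\<omega>. (cmod (\<phi> (S2' \<omega> - S2 \<omega>)))\<^sup>2 \<partial>M) \<le> 4 * Mf * V / r\<^sup>2"
    unfolding phn S1'_def S1_def S2'_def S2_def e_def V_def r2
    using second_moment_block_shift_diff_le[OF Mf vs] by simp_all
  have b1: "(\<integral>\<omega>. (cmod (\<phi> (S2' \<omega>)))\<^sup>2 \<partial>M) \<le> Mf * V" and b2: "(\<integral>\<omega>. (cmod (S1 \<omega>))\<^sup>2 \<partial>M) \<le> Mf * V"
    unfolding phn S2'_def S1_def V_def
    using second_moment_twisted_sum_le[OF finite_block Mf] by (simp_all add: card_block)
  have "cmod (\<integral>\<omega>. (S1' \<omega> - S1 \<omega>) * \<phi> (S2' \<omega>) \<partial>M) \<le> (4 * Mf * V + Mf * V) / (2 * r)"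
    by (rule norm_integral_mult_le_balanced[OF L2_diff[OF L(2,1)] phL2[OF L(4)] r0 d1 b1])
  moreover have "cmod (\<integral>\<omega>. \<phi> (S2' \<omega> - S2 \<omega>) * S1 \<omega> \<partial>M) \<le> (4 * Mf * V + Mf * V) / (2 * r)"
    by (rule norm_integral_mult_le_balanced[OF phL2[OF L2_diff[OF L(4,3)]] L(1) r0 d2 b2])
  ultimately have "cmod ((\<alpha> - 1) * P) \<le> (4 * Mf * V + Mf * V) / (2 * r) + (4 * Mf * V + Mf * V) / (2 * r)"
    unfolding split by (rule order.trans[OF norm_triangle_ineq add_mono])
  also have "\<dots> = 5 * Mf * V / r"
    by (simp add: field_simps)
  finally show ?thesis
    by (simp add: norm_mult \<alpha>_def e_def P_def S1_def S2_def V_def r_def)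
qed

lemma second_moment_twisted_sum_fejer:
  "(\<integral>\<omega>. (cmod (twisted_sum X \<mu> (block v w) \<omega>))\<^sup>2 \<partial>M)
     = integral cube (\<lambda>\<theta>. fejer_kernel (block v 0) \<mu> \<theta> * dens \<theta>) / (2 * pi) ^ CARD('d)"
proof -
  have eq: "(cmod (\<Sum>k\<in>block v w. twist \<mu> k * fourier_mode k \<theta>))\<^sup>2 = fejer_kernel (block v 0) \<mu> \<theta>" for \<theta>
    using fejer_kernel_block_shift[of v w \<mu> \<theta>] unfolding fejer_kernel_def .
  show ?thesis by (simp only: twisted_sum_twist second_moment_spectral[OF finite_block] eq)
qed

lemma normalized_variance_limit:
  fixes v :: "nat \<Rightarrow> nat^'d" and \<mu> :: "nat \<Rightarrow> real^'d"
  assumes vlim: "\<And>u. filterlim (\<lambda>n. v n $ u) at_top sequentially" and vpos: "\<And>n u. v n $ u \<ge> 1"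
    and mlim: "\<mu> \<longlonglongrightarrow> lam"
  shows "uniform_limit UNIV
     (\<lambda>n w. (\<integral>\<omega>. twisted_sum X (\<mu> n) (block (v n) w) \<omega> * cnj (twisted_sum X (\<mu> n) (block (v n) w) \<omega>) \<partial>M)
            / complex_of_real (real (\<Prod>u\<in>UNIV. v n $ u)))
     (\<lambda>w. complex_of_real (f (\<chi> u. cis (lam$u)))) sequentially"
proof -
  have "(\<integral>\<omega>. twisted_sum X (\<mu> n) (block (v n) w) \<omega> * cnj (twisted_sum X (\<mu> n) (block (v n) w) \<omega>) \<partial>M)
            / complex_of_real (real (\<Prod>u\<in>UNIV. v n $ u))
      = complex_of_real (integral cube (\<lambda>\<theta>. fejer_kernel (block (v n) 0) (\<mu> n) \<theta> * f (\<chi> u. cis (\<theta>$u)))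
           / ((2 * pi) ^ CARD('d) * real (\<Prod>u\<in>UNIV. v n $ u)))" for n w
    by (simp only: complex_norm_square[symmetric] integral_complex_of_real second_moment_twisted_sum_fejer)
       (simp add: dens_def)
  then show ?thesis
    by (simp only:) (intro uniform_limit_tendsto_const tendsto_of_real fejer_kernel_limit vlim vpos mlim f_cont)
qed

lemma separated_covariance_bound:
  fixes v :: "nat^'d"
  assumes Mf: "\<And>z. z \<in> torus \<Longrightarrow> f z \<le> Mf" and Mf0: "Mf \<ge> 0" and vs: "v$s \<ge> 1"
    and close: "\<bar>\<mu>1$s - \<mu>2$s\<bar> \<le> 1" and sep: "\<bar>\<mu>1$s - \<mu>2$s\<bar> > real (v$s) powr (- (1/2 - \<delta>))"
  shows "cmod (\<integral>\<omega>. twisted_sum X \<mu>1 (block v w) \<omega> * cnj (twisted_sum X \<mu>2 (block v w) \<omega>) \<partial>M)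
     \<le> 10 * Mf * real (\<Prod>u\<in>UNIV. v$u) * real (v$s) powr (- \<delta>)"
proof -
  define C where "C = (\<integral>\<omega>. twisted_sum X \<mu>1 (block v w) \<omega> * cnj (twisted_sum X \<mu>2 (block v w) \<omega>) \<partial>M)"
  define \<alpha> where "\<alpha> = twist \<mu>1 (axis s 1) * cnj (twist \<mu>2 (axis s 1))"
  define r where "r = real (v$s) powr (- (1/2 - \<delta>))"
  have r0: "r > 0" using vs by (simp add: r_def)
  have "\<alpha> = exp (\<i> * complex_of_real (\<mu>2$s - \<mu>1$s))"
    by (simp add: \<alpha>_def twist_axis exp_cnj flip: exp_add) (simp add: algebra_simps)
  then have gap: "r / 2 \<le> cmod (\<alpha> - 1)"
    using norm_exp_i_minus_1_ge[of "\<mu>2$s - \<mu>1$s"] close sep by (simp add: r_def abs_minus_commute)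
  have "cmod (\<alpha> - 1) * cmod C \<le> 5 * Mf * real (\<Prod>u\<in>UNIV. v$u) / sqrt (real (v$s))"
    unfolding C_def \<alpha>_def
    by (rule moment_block_shift_bound[where \<phi>=cnj, OF _ _ _ L2_cnj _ covariance_shift Mf Mf0 vs]) simp_all
  then have "cmod C \<le> 5 * Mf * real (\<Prod>u\<in>UNIV. v$u) / sqrt (real (v$s)) / (r / 2)"
    by (rule le_divide_of_mult_le[OF _ gap]) (use r0 in auto)
  also have "\<dots> = 10 * Mf * real (\<Prod>u\<in>UNIV. v$u) * (1 / (sqrt (real (v$s)) * r))"
    by simp
  also have "\<dots> = 10 * Mf * real (\<Prod>u\<in>UNIV. v$u) * real (v$s) powr (- \<delta>)"
    unfolding r_def using vs by (subst inverse_sqrt_mult_powr) simp_all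
  finally show ?thesis by (simp add: C_def)
qed

lemma normalized_covariance_separated_limit:
  fixes v :: "nat \<Rightarrow> nat^'d" and \<mu>1 \<mu>2 :: "nat \<Rightarrow> real^'d"
  assumes vpos: "\<And>n u. v n $ u \<ge> 1"
    and minlim: "filterlim (\<lambda>n. Min (range (\<lambda>u. v n $ u))) at_top sequentially"
    and m1: "\<mu>1 \<longlonglongrightarrow> lam" and m2: "\<mu>2 \<longlonglongrightarrow> lam"
    and d: "0 < \<delta>" and N: "\<forall>n\<ge>N. \<exists>s. \<bar>\<mu>1 n $ s - \<mu>2 n $ s\<bar> > real (v n $ s) powr (- (1/2 - \<delta>))"
  shows "uniform_limit UNIV
     (\<lambda>n w. (\<integral>\<omega>. twisted_sum X (\<mu>1 n) (block (v n) w) \<omega> * cnj (twisted_sum X (\<mu>2 n) (block (v n) w) \<omega>) \<partial>M)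
            / complex_of_real (real (\<Prod>u\<in>UNIV. v n $ u)))
     (\<lambda>w. 0) sequentially"
proof -
  obtain Mf where Mf: "\<And>z. z \<in> torus \<Longrightarrow> f z \<le> Mf" and Mf0: "Mf \<ge> 0"
    using density_bounded by blast
  define mn where "mn n = real (Min (range (\<lambda>u. v n $ u)))" for n
  have mn_lim: "filterlim mn at_top sequentially"
    unfolding mn_def by (rule filterlim_compose[OF filterlim_real_sequentially minlim])
  have "(\<lambda>n. \<mu>1 n - \<mu>2 n) \<longlonglongrightarrow> lam - lam" by (intro tendsto_intros m1 m2)
  then have "\<forall>\<^sub>F n in sequentially. norm (\<mu>1 n - \<mu>2 n) < 1" by (auto dest: tendstoD[of _ _ _ 1] simp: dist_norm)
  moreover have "\<forall>\<^sub>F n in sequentially. n \<ge> N" by (rule eventually_ge_at_top)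
  ultimately have "\<forall>\<^sub>F n in sequentially. \<forall>w\<in>UNIV. cmod ((\<integral>\<omega>. twisted_sum X (\<mu>1 n) (block (v n) w) \<omega>
        * cnj (twisted_sum X (\<mu>2 n) (block (v n) w) \<omega>) \<partial>M) / complex_of_real (real (\<Prod>u\<in>UNIV. v n $ u)))
      \<le> 10 * Mf * mn n powr (- \<delta>)"
  proof eventually_elim
    case (elim n)
    show ?case
    proof
      fix w
      define C where "C = (\<integral>\<omega>. twisted_sum X (\<mu>1 n) (block (v n) w) \<omega> * cnj (twisted_sum X (\<mu>2 n) (block (v n) w) \<omega>) \<partial>M)"
      define V where "V = real (\<Prod>u\<in>UNIV. v n $ u)"
      have V0: "V > 0" using vpos[of n] by (auto simp: V_def Suc_le_eq intro!: prod_pos)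
      obtain s where s: "\<bar>\<mu>1 n $ s - \<mu>2 n $ s\<bar> > real (v n $ s) powr (- (1/2 - \<delta>))"
        using N elim by blast
      have close: "\<bar>\<mu>1 n $ s - \<mu>2 n $ s\<bar> \<le> 1"
        using component_le_norm_cart[of "\<mu>1 n - \<mu>2 n" s] elim by simp
      have "cmod C \<le> 10 * Mf * V * real (v n $ s) powr (- \<delta>)"
        using separated_covariance_bound[OF Mf Mf0 vpos close s] by (simp add: C_def V_def)
      also have "\<dots> \<le> 10 * Mf * V * mn n powr (- \<delta>)"
      proof (intro mult_left_mono powr_mono2')
        show "0 < mn n" using vpos[of n] by (simp add: mn_def Min_gr_iff Suc_le_eq)
        show "mn n \<le> real (v n $ s)" by (simp add: mn_def)
      qed (use d Mf0 V0 in auto)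
      finally have "cmod C \<le> 10 * Mf * V * mn n powr (- \<delta>)" .
      then show "cmod (C / complex_of_real V) \<le> 10 * Mf * mn n powr (- \<delta>)"
        using V0 by (simp add: norm_divide pos_divide_le_eq mult_ac)
    qed
  qed
  moreover have "(\<lambda>n. 10 * Mf * mn n powr (- \<delta>)) \<longlonglongrightarrow> 0"
    using tendsto_mult[OF tendsto_const[of "10 * Mf"] tendsto_neg_powr[OF _ mn_lim, of "- \<delta>"]] d by simp
  ultimately show ?thesis by (rule uniform_limit_null_bound)
qed

lemma pseudo_covariance_bound:
  fixes v :: "nat^'d"
  assumes stat: "strictly_stationary M X"
    and Mf: "\<And>z. z \<in> torus \<Longrightarrow> f z \<le> Mf" and Mf0: "Mf \<ge> 0" and vs: "v$s \<ge> 1"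
    and gap: "c \<le> cmod (twist \<mu>1 (axis s 1) * twist \<mu>2 (axis s 1) - 1)" "0 < c"
  shows "cmod (\<integral>\<omega>. twisted_sum X \<mu>1 (block v w) \<omega> * twisted_sum X \<mu>2 (block v w) \<omega> \<partial>M)
     \<le> 5 * Mf * real (\<Prod>u\<in>UNIV. v$u) / sqrt (real (v$s)) / c"
proof (rule le_divide_of_mult_le[OF _ gap(1)])
  have "(\<integral>\<omega>. X (k + axis s 1) \<omega> * X (j + axis s 1) \<omega> \<partial>M) = (\<integral>\<omega>. X k \<omega> * X j \<omega> \<partial>M)" for k j
    by (rule stationary_pseudo_covariance[OF stat meas])
  from moment_block_shift_bound[where \<phi>="\<lambda>z. z", OF _ _ _ _ _ this Mf Mf0 vs]
  show "cmod (twist \<mu>1 (axis s 1) * twist \<mu>2 (axis s 1) - 1)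
      * cmod (\<integral>\<omega>. twisted_sum X \<mu>1 (block v w) \<omega> * twisted_sum X \<mu>2 (block v w) \<omega> \<partial>M)
      \<le> 5 * Mf * real (\<Prod>u\<in>UNIV. v$u) / sqrt (real (v$s))"
    by simp
qed (use gap(2) in auto)

lemma normalized_pseudo_covariance_limit:
  fixes v :: "nat \<Rightarrow> nat^'d" and \<mu>1 \<mu>2 :: "nat \<Rightarrow> real^'d"
  assumes stat: "strictly_stationary M X"
    and vpos: "\<And>n u. v n $ u \<ge> 1"
    and vs: "filterlim (\<lambda>n. v n $ s) at_top sequentially"
    and m1: "\<mu>1 \<longlonglongrightarrow> lam" and m2: "\<mu>2 \<longlonglongrightarrow> lam"
    and ls: "-pi < lam$s" "lam$s \<le> pi" "lam$s \<noteq> 0" "lam$s \<noteq> pi"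
  shows "uniform_limit UNIV
     (\<lambda>n w. (\<integral>\<omega>. twisted_sum X (\<mu>1 n) (block (v n) w) \<omega> * twisted_sum X (\<mu>2 n) (block (v n) w) \<omega> \<partial>M)
            / complex_of_real (real (\<Prod>u\<in>UNIV. v n $ u)))
     (\<lambda>w. 0) sequentially"
proof -
  obtain Mf where Mf: "\<And>z. z \<in> torus \<Longrightarrow> f z \<le> Mf" and Mf0: "Mf \<ge> 0"
    using density_bounded by blast
  define c where "c = cmod (exp (- \<i> * complex_of_real (lam$s)) * exp (- \<i> * complex_of_real (lam$s)) - 1)"
  have c0: "c > 0" using exp_minus_i_square_ne_1[OF ls] by (simp add: c_def)
  have "(\<lambda>n. cmod (twist (\<mu>1 n) (axis s 1) * twist (\<mu>2 n) (axis s 1) - 1)) \<longlonglongrightarrow> c"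
    unfolding c_def twist_axis by (intro tendsto_intros m1 m2)
  then have "\<forall>\<^sub>F n in sequentially. c / 2 < cmod (twist (\<mu>1 n) (axis s 1) * twist (\<mu>2 n) (axis s 1) - 1)"
    using c0 by (intro order_tendstoD(1)) auto
  then have "\<forall>\<^sub>F n in sequentially. \<forall>w\<in>UNIV. cmod ((\<integral>\<omega>. twisted_sum X (\<mu>1 n) (block (v n) w) \<omega>
        * twisted_sum X (\<mu>2 n) (block (v n) w) \<omega> \<partial>M) / complex_of_real (real (\<Prod>u\<in>UNIV. v n $ u)))
      \<le> 10 * Mf / c / sqrt (real (v n $ s))"
  proof (intro eventually_mono[OF _ ballI])
    fix n w assume gap: "c / 2 < cmod (twist (\<mu>1 n) (axis s 1) * twist (\<mu>2 n) (axis s 1) - 1)"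
    have V0: "real (\<Prod>u\<in>UNIV. v n $ u) > 0" using vpos[of n] by (auto simp: Suc_le_eq intro!: prod_pos)
    have "cmod (\<integral>\<omega>. twisted_sum X (\<mu>1 n) (block (v n) w) \<omega> * twisted_sum X (\<mu>2 n) (block (v n) w) \<omega> \<partial>M)
        \<le> 5 * Mf * real (\<Prod>u\<in>UNIV. v n $ u) / sqrt (real (v n $ s)) / (c / 2)"
      using gap c0 by (intro pseudo_covariance_bound[OF stat Mf Mf0 vpos]) auto
    then show "cmod ((\<integral>\<omega>. twisted_sum X (\<mu>1 n) (block (v n) w) \<omega> * twisted_sum X (\<mu>2 n) (block (v n) w) \<omega> \<partial>M)
        / complex_of_real (real (\<Prod>u\<in>UNIV. v n $ u))) \<le> 10 * Mf / c / sqrt (real (v n $ s))"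
      using V0 by (simp add: norm_divide pos_divide_le_eq field_simps flip: prod_norm)
  qed
  moreover have "(\<lambda>n. 10 * Mf / c / sqrt (real (v n $ s))) \<longlonglongrightarrow> 0"
    by (intro tendsto_divide_0[OF tendsto_const] filterlim_at_top_imp_at_infinity filterlim_compose[OF sqrt_at_top]
          filterlim_compose[OF filterlim_real_sequentially vs])
  ultimately show ?thesis by (rule uniform_limit_null_bound)
qed

lemma normalized_cross_moment_limit:
  fixes v :: "nat \<Rightarrow> nat^'d" and \<mu>1 \<mu>2 :: "nat \<Rightarrow> real^'d"
  assumes stat: "strictly_stationary M X"
    and lam_s: "-pi < lam$s" "lam$s \<le> pi" "lam$s \<notin> {-pi, 0, pi}"
    and v_pos: "\<And>n u. v n $ u \<ge> 1"
    and v_lim: "filterlim (\<lambda>n. Min (range (\<lambda>u. v n $ u))) at_top sequentially"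
    and m1: "\<mu>1 \<longlonglongrightarrow> lam" and m2: "\<mu>2 \<longlonglongrightarrow> lam"
    and sep: "\<mu>1 \<noteq> \<mu>2 \<Longrightarrow> \<exists>\<delta>>0. \<exists>N. \<forall>n\<ge>N. \<exists>s. \<bar>\<mu>1 n $ s - \<mu>2 n $ s\<bar> > real (v n $ s) powr (- (1/2 - \<delta>))"
  shows "uniform_limit UNIV
     (\<lambda>n w. c * ((\<integral>\<omega>. twisted_sum X (\<mu>1 n) (block (v n) w) \<omega> * cnj (twisted_sum X (\<mu>2 n) (block (v n) w) \<omega>) \<partial>M)
                / complex_of_real (real (\<Prod>u\<in>UNIV. v n $ u)))
          + d * ((\<integral>\<omega>. twisted_sum X (\<mu>1 n) (block (v n) w) \<omega> * twisted_sum X (\<mu>2 n) (block (v n) w) \<omega> \<partial>M)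
                / complex_of_real (real (\<Prod>u\<in>UNIV. v n $ u))))
     (\<lambda>w. if \<mu>1 = \<mu>2 then c * complex_of_real (f (\<chi> u. cis (lam$u))) else 0) sequentially"
proof -
  have vlim: "filterlim (\<lambda>n. v n $ u) at_top sequentially" for u
    by (rule filterlim_at_top_mono[OF v_lim]) simp
  have "lam$s \<noteq> 0" "lam$s \<noteq> pi" using lam_s(3) by auto
  note pseudo = normalized_pseudo_covariance_limit[OF stat v_pos vlim m1 m2 lam_s(1,2) this]
  have covariance: "uniform_limit UNIV
     (\<lambda>n w. (\<integral>\<omega>. twisted_sum X (\<mu>1 n) (block (v n) w) \<omega> * cnj (twisted_sum X (\<mu>2 n) (block (v n) w) \<omega>) \<partial>M)
            / complex_of_real (real (\<Prod>u\<in>UNIV. v n $ u)))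
     (\<lambda>w. if \<mu>1 = \<mu>2 then complex_of_real (f (\<chi> u. cis (lam$u))) else 0) sequentially"
  proof (cases "\<mu>1 = \<mu>2")
    case True
    with normalized_variance_limit[OF vlim v_pos m1] show ?thesis by simp
  next
    case False
    with sep obtain \<delta> N where "0 < \<delta>" "\<forall>n\<ge>N. \<exists>s. \<bar>\<mu>1 n $ s - \<mu>2 n $ s\<bar> > real (v n $ s) powr (- (1/2 - \<delta>))"
      by blast
    with normalized_covariance_separated_limit[OF v_pos v_lim m1 m2] False show ?thesis by simp
  qed
  show ?thesis
    by (rule uniform_limit_eq_rhs[OF uniform_limit_add[OF
          bounded_linear.uniform_limit[OF bounded_linear_mult_right[of c] covariance]
          bounded_linear.uniform_limit[OF bounded_linear_mult_right[of d] pseudo]]]) auto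
qed

lemma normalized_Gfun_second_moment_limit:
  fixes v :: "nat \<Rightarrow> nat^'d" and lams :: "nat \<Rightarrow> nat \<Rightarrow> real^'d"
  assumes stat: "strictly_stationary M X"
    and lam_s: "-pi < lam$s" "lam$s \<le> pi" "lam$s \<notin> {-pi, 0, pi}"
    and v_pos: "\<And>n u. v n $ u \<ge> 1"
    and v_lim: "filterlim (\<lambda>n. Min (range (\<lambda>u. v n $ u))) at_top sequentially"
    and lams_lim: "\<And>j. j \<in> {1..m} \<Longrightarrow> (lams j \<longlonglongrightarrow> lam)"
    and sep: "\<And>j k. j \<in> {1..m} \<Longrightarrow> k \<in> {1..m} \<Longrightarrow> j \<noteq> k \<Longrightarrow>
        \<exists>\<delta>>0. \<exists>N. \<forall>n\<ge>N. \<exists>s. \<bar>lams j n $ s - lams k n $ s\<bar> > real (v n $ s) powr (- (1/2 - \<delta>))"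
  shows "uniform_limit UNIV
     (\<lambda>n w. (1 / real (\<Prod>u\<in>UNIV. v n $ u)) *
              (\<integral>\<omega>. (Gfun m a b (\<lambda>j. twisted_sum X (lams j n) (block (v n) w) \<omega>))\<^sup>2 \<partial>M))
     (\<lambda>w. 1/2 * f (\<chi> u. cis (lam$u)) * (\<Sum>j=1..m. (a j)\<^sup>2 + (b j)\<^sup>2)) sequentially"
proof -
  define \<gamma> where "\<gamma> j = Complex (a j) (- b j)" for j
  have distinct: "lams j \<noteq> lams l" if "j \<in> {1..m}" "l \<in> {1..m}" "j \<noteq> l" for j l
  proof
    assume "lams j = lams l"
    with sep[OF that] show False by (auto simp: powr_gt_zero less_le_not_le)
  qed
  have pair: "uniform_limit UNIV
      (\<lambda>n w. \<gamma> j * cnj (\<gamma> l)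
          * ((\<integral>\<omega>. twisted_sum X (lams j n) (block (v n) w) \<omega> * cnj (twisted_sum X (lams l n) (block (v n) w) \<omega>) \<partial>M)
             / complex_of_real (real (\<Prod>u\<in>UNIV. v n $ u)))
        + \<gamma> j * \<gamma> l * ((\<integral>\<omega>. twisted_sum X (lams j n) (block (v n) w) \<omega> * twisted_sum X (lams l n) (block (v n) w) \<omega> \<partial>M)
             / complex_of_real (real (\<Prod>u\<in>UNIV. v n $ u))))
      (\<lambda>w. if j = l then \<gamma> j * cnj (\<gamma> l) * complex_of_real (f (\<chi> u. cis (lam$u))) else 0) sequentially"
    if jl: "j \<in> {1..m}" "l \<in> {1..m}" for j l
  proof -
    have same: "lams j = lams l \<longleftrightarrow> j = l" using distinct[OF jl] by auto
    have "lams j \<noteq> lams l \<Longrightarrow> \<exists>\<delta>>0. \<exists>N. \<forall>n\<ge>N. \<exists>s. \<bar>lams j n $ s - lams l n $ s\<bar> > real (v n $ s) powr (- (1/2 - \<delta>))"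
      using sep[OF jl] same by blast
    from normalized_cross_moment_limit[OF stat lam_s v_pos v_lim lams_lim[OF jl(1)] lams_lim[OF jl(2)] this]
    show ?thesis unfolding same .
  qed
  have "uniform_limit UNIV
      (\<lambda>n w. \<Sum>j=1..m. \<Sum>l=1..m. \<gamma> j * cnj (\<gamma> l)
          * ((\<integral>\<omega>. twisted_sum X (lams j n) (block (v n) w) \<omega> * cnj (twisted_sum X (lams l n) (block (v n) w) \<omega>) \<partial>M)
             / complex_of_real (real (\<Prod>u\<in>UNIV. v n $ u)))
        + \<gamma> j * \<gamma> l * ((\<integral>\<omega>. twisted_sum X (lams j n) (block (v n) w) \<omega> * twisted_sum X (lams l n) (block (v n) w) \<omega> \<partial>M)
             / complex_of_real (real (\<Prod>u\<in>UNIV. v n $ u))))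
      (\<lambda>w. \<Sum>j=1..m. \<Sum>l=1..m. if j = l then \<gamma> j * cnj (\<gamma> l) * complex_of_real (f (\<chi> u. cis (lam$u))) else 0)
      sequentially"
    by (intro uniform_limit_sum pair)
  from bounded_linear.uniform_limit[OF bounded_linear_divide[of 2] bounded_linear.uniform_limit[OF bounded_linear_Re this]]
  have lim: "uniform_limit UNIV
      (\<lambda>n w. (1 / real (\<Prod>u\<in>UNIV. v n $ u)) *
              (\<integral>\<omega>. (Gfun m a b (\<lambda>j. twisted_sum X (lams j n) (block (v n) w) \<omega>))\<^sup>2 \<partial>M))
      (\<lambda>w. f (\<chi> u. cis (lam$u)) * (\<Sum>j=1..m. (a j)\<^sup>2 + (b j)\<^sup>2) / 2) sequentially"
    unfolding \<gamma>_def Re_sum_diagonal[OF finite_atLeastAtMost] normalized_integral_Gfun_square[OF L2_twisted[OF L2X]] .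
  then show ?thesis by (simp add: mult.commute)
qed

end

theorem lemma2p6:
  fixes M :: "'a measure"
    and X :: "int^'d::finite \<Rightarrow> 'a \<Rightarrow> complex"
    and f :: "complex^'d \<Rightarrow> real"
    and m :: nat
    and lam :: "real^'d"
    and v :: "nat \<Rightarrow> nat^'d"
    and lams :: "nat \<Rightarrow> nat \<Rightarrow> real^'d"
    and a b :: "nat \<Rightarrow> real"
  assumes "prob_space M"
    and meas: "\<And>k. X k \<in> borel_measurable M"
    and centered: "\<And>k. (\<integral>\<omega>. X k \<omega> \<partial>M) = 0"
    and sq_int: "integrable M (\<lambda>\<omega>. (norm (X 0 \<omega>))\<^sup>2)"
    and stat: "strictly_stationary M X"
    and mixing: "(\<lambda>n. rho' M X n) \<longlonglongrightarrow> 0"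
    and spec: "is_spectral_density M X f"
    and f_cont: "continuous_on torus f"
    and "m \<ge> 1"
    and lam_range: "\<forall>u. -pi < lam$u \<and> lam$u \<le> pi"
    and lam_P: "\<not> (\<forall>u. lam$u \<in> {-pi, 0, pi})"
    and v_pos: "\<And>n u. v n $ u \<ge> 1"
    and v_lim: "filterlim (\<lambda>n. Min (range (\<lambda>u. v n $ u))) at_top sequentially"
    and lams_range: "\<And>j n u. j \<in> {1..m} \<Longrightarrow> -pi < lams j n $ u \<and> lams j n $ u \<le> pi"
    and lams_lim: "\<And>j. j \<in> {1..m} \<Longrightarrow> (lams j \<longlonglongrightarrow> lam)"
    and sep: "\<And>j k. j \<in> {1..m} \<Longrightarrow> k \<in> {1..m} \<Longrightarrow> j \<noteq> k \<Longrightarrow>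
        \<exists>\<delta>::real. 0 < \<delta> \<and> \<delta> < 1/2 \<and> (\<exists>N. \<forall>n\<ge>N. \<exists>s.
           \<bar>lams j n $ s - lams k n $ s\<bar> > real (v n $ s) powr (- (1/2 - \<delta>)))"
  shows "(\<lambda>n. SUP w::int^'d. \<bar>1/2 * f (\<chi> u. cis (lam$u)) * (\<Sum>j=1..m. (a j)\<^sup>2 + (b j)\<^sup>2)
            - (1 / real (\<Prod>u\<in>UNIV. v n $ u)) *
              (\<integral>\<omega>. (Gfun m a b (\<lambda>j. twisted_sum X (lams j n) (block (v n) w) \<omega>))\<^sup>2 \<partial>M)\<bar>)
         \<longlonglongrightarrow> 0"
proof -
  interpret spectral_field M X f
    using meas stationary_L2[OF stat meas sq_int] spec f_cont by (simp add: spectral_field_def)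
  obtain s where s: "lam$s \<notin> {-pi, 0, pi}" using lam_P by blast
  have "uniform_limit UNIV
     (\<lambda>n w. (1 / real (\<Prod>u\<in>UNIV. v n $ u)) *
              (\<integral>\<omega>. (Gfun m a b (\<lambda>j. twisted_sum X (lams j n) (block (v n) w) \<omega>))\<^sup>2 \<partial>M))
     (\<lambda>w. 1/2 * f (\<chi> u. cis (lam$u)) * (\<Sum>j=1..m. (a j)\<^sup>2 + (b j)\<^sup>2)) sequentially"
  proof (rule normalized_Gfun_second_moment_limit[OF stat _ _ s v_pos v_lim lams_lim])
    fix j k assume "j \<in> {1..m}" "k \<in> {1..m}" "j \<noteq> k"
    from sep[OF this] show "\<exists>\<delta>>0. \<exists>N. \<forall>n\<ge>N. \<exists>s. \<bar>lams j n $ s - lams k n $ s\<bar> > real (v n $ s) powr (- (1/2 - \<delta>))"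
      by blast
  qed (use lam_range in auto)
  then show ?thesis by (rule uniform_limit_SUP_abs_diff)
qed

end
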